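(* Consider the Hubbard model described in the context, and take a constant $\nu\in(0,1)$. Suppose that a finite-energy state $|\Phi\rangle$ with $N_e$ electrons is an eigenstate of $(\mathbf{S}_{\mathrm{tot}})^2$ with total spin $S_{\mathrm{tot}}\le\nu S_{\max}$, where $S_{\max}=N_e/2$. Write $|\Phi\rangle=\sum_{C,\boldsymbol{\sigma}}\psi_{C,\boldsymbol{\sigma}}\bigl(\prod_{x\in C}a^\dagger_{x,\sigma(x)}\bigr)|\Phi_{\mathrm{vac}}\rangle$, as explained in the context. Let $C$ be such that $\psi_{C,\boldsymbol{\sigma}}\neq0$ for some $\boldsymbol{\sigma}$. Decompose $C$ into its connected components (with respect to the bonds in $\mathcal{E}$) as $C=C_0\cup C_1\cup\cdots\cup C_n$, where $|C_0|\ge|C_\ell|$ for all $\ell$. Then $\sum_{\ell=1}^n|C_\ell|\ge\frac{N_e}{2}(1-\nu)$.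
   Context: Lattice: $\mathcal{M}$ is a finite set of sites. $\mathcal{B}$ is a set of ordered pairs $(x,y)$ of distinct sites (bonds) such that for any $x,y$ at most one of $(x,y),(y,x)$ lies in $\mathcal{B}$. Put $\mathcal{E}=\mathcal{B}\cup\{(y,x):(x,y)\in\mathcal{B}\}$. $\mathcal{M}$ is connected via bonds, and each site has exactly $\zeta$ sites $y$ with $(x,y)\in\mathcal{E}$. For each $(x,y)\in\mathcal{B}$ introduce two additional sites $u(x,y),\bar u(x,y)$; let $\mathcal{O}$ and $\bar{\mathcal{O}}$ be the sets of all $u(x,y)$ and all $\bar u(x,y)$ respectively, and let $\Lambda=\mathcal{M}\cup\mathcal{O}\cup\bar{\mathcal{O}}$. Operators: $c_{z,\sigma}$ ($z\in\Lambda$, $\sigma\in\{\uparrow,\downarrow\}$) are the fermion annihilation operators, $n_{z,\sigma}=c^\dagger_{z,\sigma}c_{z,\sigma}$, and $|\Phi_{\mathrm{vac}}\rangle$ is the vacuum. Fix $\mu>0$. For $x\in\mathcal{M}$, $a_{x,\sigma}=(1+2\zeta\mu^2)^{-1/2}\{c_{x,\sigma}+\mu\sum_{y:(x,y)\in\mathcal{B}}(c_{u(x,y),\sigma}-c_{\bar u(x,y),\sigma})+\mu\sum_{y:(y,x)\in\mathcal{B}}(c_{u(y,x),\sigma}+c_{\bar u(y,x),\sigma})\}$. For $u=u(x,y)$, $b_{u,\sigma}=c_{u,\sigma}-\mu(c_{x,\sigma}+c_{y,\sigma})$; for $\bar u=\bar u(x,y)$, $b_{\bar u,\sigma}=c_{\bar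 u,\sigma}+\mu(c_{x,\sigma}-c_{y,\sigma})$. Hamiltonian, with $s,t,U>0$: $H=t\sum_{(x,y)\in\mathcal{E},\sigma}a^\dagger_{x,\sigma}a_{y,\sigma}+s\sum_{v\in\mathcal{O}\cup\bar{\mathcal{O}},\sigma}b^\dagger_{v,\sigma}b_{v,\sigma}+U\sum_{z\in\Lambda}n_{z,\uparrow}n_{z,\downarrow}$. It acts on the $N_e$-electron space with $N_e\le|\mathcal{M}|$. A fixed state $|\Phi\rangle$ (independent of $s,U$) is a finite-energy state if $\lim_{s\uparrow\infty}\lim_{U\uparrow\infty}\langle\Phi|H|\Phi\rangle<\infty$. Every finite-energy state can be expanded uniquely as $|\Phi\rangle=\sum_{C,\boldsymbol{\sigma}}\psi_{C,\boldsymbol{\sigma}}\bigl(\prod_{x\in C}a^\dagger_{x,\sigma(x)}\bigr)|\Phi_{\mathrm{vac}}\rangle$. Here $C$ ranges over subsets of $\mathcal{M}$ with $|C|=N_e$, $\boldsymbol{\sigma}=(\sigma(x))_{x\in C}\in\{\uparrow,\downarrow\}^C$, the product is ordered by a fixed ordering of $\mathcal{M}$, and $\psi_{C,\boldsymbol{\sigma}}\in\mathbb{C}$. Spin: $S^+_z=c^\dagger_{z,\uparrow}c_{z,\downarrow}$, $S^-_z=c^\dagger_{z,\downarrow}c_{z,\uparrow}$, $S^{(3)}_z=\tfrac12(n_{z,\uparrow}-n_{z,\downarrow})$, $S^{(1)}_z=(S^+_z+S^-_z)/2$, $S^{(2)}_z=(S^+_z-S^-_z)/(2i)$. The total spin is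 $\mathbf{S}_{\mathrm{tot}}=\sum_{z\in\Lambda}\mathbf{S}_z$, with eigenvalues of $(\mathbf{S}_{\mathrm{tot}})^2$ written $S_{\mathrm{tot}}(S_{\mathrm{tot}}+1)$. *)

theory Defs
  imports "HOL-Library.FuncSet" Complex_Main
begin

(* Sites of Lambda: Ms x (x in M), Uo x y = u(x,y), Ub x y = ubar(x,y) *)
datatype 'a site = Ms 'a | Uo 'a 'a | Ub 'a 'a
datatype spin = Up | Dn

type_synonym 'a mode = "'a site \<times> spin"
(* Fock space: amplitudes on the occupation basis |S>, S a finite set of modes,
   |S> = c^dag_{m1} ... c^dag_{mk} |vac> with m1 < ... < mk *)
type_synonym 'a fock = "'a mode set \<Rightarrow> complex"

definition edges :: "('a \<times> 'a) set \<Rightarrow> ('a \<times> 'a) set" where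
  "edges B = B \<union> {(y, x). (x, y) \<in> B}"

definition lattice :: "'a set \<Rightarrow> ('a \<times> 'a) set \<Rightarrow> nat \<Rightarrow> bool" where
  "lattice M B \<zeta> \<longleftrightarrow> finite M \<and> B \<subseteq> M \<times> M
     \<and> (\<forall>x y. (x, y) \<in> B \<longrightarrow> x \<noteq> y)
     \<and> (\<forall>x y. (x, y) \<in> B \<longrightarrow> (y, x) \<notin> B)
     \<and> (\<forall>x\<in>M. \<forall>y\<in>M. (x, y) \<in> (edges B)\<^sup>*)
     \<and> (\<forall>x\<in>M. card {y. (x, y) \<in> edges B} = \<zeta>)"

definition Osites :: "('a \<times> 'a) set \<Rightarrow> 'a site set" where
  "Osites B = {Uo x y | x y. (x, y) \<in> B}"

definition Obsites :: "('a \<times> 'a) set \<Rightarrow> 'a site set" where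
  "Obsites B = {Ub x y | x y. (x, y) \<in> B}"

definition Lam :: "'a set \<Rightarrow> ('a \<times> 'a) set \<Rightarrow> 'a site set" where
  "Lam M B = Ms ` M \<union> Osites B \<union> Obsites B"

definition modes :: "'a set \<Rightarrow> ('a \<times> 'a) set \<Rightarrow> 'a mode set" where
  "modes M B = Lam M B \<times> {Up, Dn}"

fun site_less :: "'a::linorder site \<Rightarrow> 'a site \<Rightarrow> bool" where
  "site_less (Ms x) (Ms y) = (x < y)"
| "site_less (Ms x) _ = True"
| "site_less (Uo a b) (Ms _) = False"
| "site_less (Uo a b) (Uo c d) = (a < c \<or> (a = c \<and> b < d))"
| "site_less (Uo a b) (Ub _ _) = True"
| "site_less (Ub a b) (Ub c d) = (a < c \<or> (a = c \<and> b < d))"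
| "site_less (Ub a b) _ = False"

definition mode_less :: "'a::linorder mode \<Rightarrow> 'a mode \<Rightarrow> bool" where
  "mode_less m m' \<longleftrightarrow> site_less (fst m) (fst m') \<or>
     (fst m = fst m' \<and> snd m = Up \<and> snd m' = Dn)"

definition fsign :: "'a::linorder mode set \<Rightarrow> 'a mode \<Rightarrow> complex" where
  "fsign T m = (-1) ^ card {m' \<in> T. mode_less m' m}"

definition cr :: "'a::linorder mode \<Rightarrow> 'a fock \<Rightarrow> 'a fock" where
  "cr m \<Phi> = (\<lambda>S. if m \<in> S then fsign (S - {m}) m * \<Phi> (S - {m}) else 0)"

definition an :: "'a::linorder mode \<Rightarrow> 'a fock \<Rightarrow> 'a fock" where
  "an m \<Phi> = (\<lambda>S. if m \<notin> S then fsign S m * \<Phi> (insert m S) else 0)"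

definition numop :: "'a::linorder mode \<Rightarrow> 'a fock \<Rightarrow> 'a fock" where
  "numop m \<Phi> = cr m (an m \<Phi>)"

definition vac :: "'a fock" where
  "vac = (\<lambda>S. if S = {} then 1 else 0)"

definition ann :: "'a::linorder site set \<Rightarrow> ('a site \<Rightarrow> real) \<Rightarrow> spin \<Rightarrow> 'a fock \<Rightarrow> 'a fock" where
  "ann L f \<sigma> \<Phi> = (\<lambda>S. \<Sum>z\<in>L. complex_of_real (f z) * an (z, \<sigma>) \<Phi> S)"

definition cre :: "'a::linorder site set \<Rightarrow> ('a site \<Rightarrow> real) \<Rightarrow> spin \<Rightarrow> 'a fock \<Rightarrow> 'a fock" where
  "cre L f \<sigma> \<Phi> = (\<lambda>S. \<Sum>z\<in>L. complex_of_real (f z) * cr (z, \<sigma>) \<Phi> S)"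

definition acoef :: "real \<Rightarrow> nat \<Rightarrow> ('a \<times> 'a) set \<Rightarrow> 'a \<Rightarrow> 'a site \<Rightarrow> real" where
  "acoef \<mu> \<zeta> B x z = (1 / sqrt (1 + 2 * real \<zeta> * \<mu>\<^sup>2)) *
     (case z of
        Ms w \<Rightarrow> (if w = x then 1 else 0)
      | Uo p q \<Rightarrow> (if (p, q) \<in> B \<and> p = x then \<mu> else if (p, q) \<in> B \<and> q = x then \<mu> else 0)
      | Ub p q \<Rightarrow> (if (p, q) \<in> B \<and> p = x then - \<mu> else if (p, q) \<in> B \<and> q = x then \<mu> else 0))"

definition bcoef :: "real \<Rightarrow> 'a site \<Rightarrow> 'a site \<Rightarrow> real" where
  "bcoef \<mu> v z = (case v of
        Ms _ \<Rightarrow> 0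
      | Uo p q \<Rightarrow> (if z = Uo p q then 1 else if z = Ms p \<or> z = Ms q then - \<mu> else 0)
      | Ub p q \<Rightarrow> (if z = Ub p q then 1 else if z = Ms p then \<mu> else if z = Ms q then - \<mu> else 0))"

definition Ham :: "'a::linorder set \<Rightarrow> ('a \<times> 'a) set \<Rightarrow> nat \<Rightarrow> real \<Rightarrow> real \<Rightarrow> real \<Rightarrow> real
                   \<Rightarrow> 'a fock \<Rightarrow> 'a fock" where
  "Ham M B \<zeta> \<mu> t s U \<Phi> = (\<lambda>S.
      complex_of_real t * (\<Sum>(x, y)\<in>edges B. \<Sum>\<sigma>\<in>{Up, Dn}.
          cre (Lam M B) (acoef \<mu> \<zeta> B x) \<sigma> (ann (Lam M B) (acoef \<mu> \<zeta> B y) \<sigma> \<Phi>) S)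
    + complex_of_real s * (\<Sum>v\<in>Osites B \<union> Obsites B. \<Sum>\<sigma>\<in>{Up, Dn}.
          cre (Lam M B) (bcoef \<mu> v) \<sigma> (ann (Lam M B) (bcoef \<mu> v) \<sigma> \<Phi>) S)
    + complex_of_real U * (\<Sum>z\<in>Lam M B. numop (z, Up) (numop (z, Dn) \<Phi>) S))"

definition inner_fock :: "'a set \<Rightarrow> ('a \<times> 'a) set \<Rightarrow> 'a fock \<Rightarrow> 'a fock \<Rightarrow> complex" where
  "inner_fock M B \<Phi> \<Psi> = (\<Sum>S\<in>Pow (modes M B). cnj (\<Phi> S) * \<Psi> S)"

definition in_space :: "'a set \<Rightarrow> ('a \<times> 'a) set \<Rightarrow> nat \<Rightarrow> 'a fock \<Rightarrow> bool" where
  "in_space M B Ne \<Phi> \<longleftrightarrow> (\<forall>S. \<Phi> S \<noteq> 0 \<longrightarrow> S \<subseteq> modes M B \<and> card S = Ne)"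

definition finite_energy :: "'a::linorder set \<Rightarrow> ('a \<times> 'a) set \<Rightarrow> nat \<Rightarrow> real \<Rightarrow> real \<Rightarrow> 'a fock \<Rightarrow> bool" where
  "finite_energy M B \<zeta> \<mu> t \<Phi> \<longleftrightarrow>
     (\<exists>g :: real \<Rightarrow> complex.
        (\<forall>s>0. ((\<lambda>U. inner_fock M B \<Phi> (Ham M B \<zeta> \<mu> t s U \<Phi>)) \<longlongrightarrow> g s) at_top)
        \<and> (\<exists>L. (g \<longlongrightarrow> L) at_top))"

definition Splus :: "'a::linorder site set \<Rightarrow> 'a fock \<Rightarrow> 'a fock" where
  "Splus L \<Phi> = (\<lambda>S. \<Sum>z\<in>L. cr (z, Up) (an (z, Dn) \<Phi>) S)"

definition Sminus :: "'a::linorder site set \<Rightarrow> 'a fock \<Rightarrow> 'a fock" where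
  "Sminus L \<Phi> = (\<lambda>S. \<Sum>z\<in>L. cr (z, Dn) (an (z, Up) \<Phi>) S)"

definition S3 :: "'a::linorder site set \<Rightarrow> 'a fock \<Rightarrow> 'a fock" where
  "S3 L \<Phi> = (\<lambda>S. \<Sum>z\<in>L. (numop (z, Up) \<Phi> S - numop (z, Dn) \<Phi> S) / 2)"

definition S1 :: "'a::linorder site set \<Rightarrow> 'a fock \<Rightarrow> 'a fock" where
  "S1 L \<Phi> = (\<lambda>S. (Splus L \<Phi> S + Sminus L \<Phi> S) / 2)"

definition S2 :: "'a::linorder site set \<Rightarrow> 'a fock \<Rightarrow> 'a fock" where
  "S2 L \<Phi> = (\<lambda>S. (Splus L \<Phi> S - Sminus L \<Phi> S) / (2 * \<i>))"

definition Stot2 :: "'a::linorder site set \<Rightarrow> 'a fock \<Rightarrow> 'a fock" where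
  "Stot2 L \<Phi> = (\<lambda>S. S1 L (S1 L \<Phi>) S + S2 L (S2 L \<Phi>) S + S3 L (S3 L \<Phi>) S)"

definition aprod :: "'a::linorder set \<Rightarrow> ('a \<times> 'a) set \<Rightarrow> nat \<Rightarrow> real \<Rightarrow> 'a set \<Rightarrow> ('a \<Rightarrow> spin) \<Rightarrow> 'a fock" where
  "aprod M B \<zeta> \<mu> C \<sigma> = foldr (\<lambda>x \<Psi>. cre (Lam M B) (acoef \<mu> \<zeta> B x) (\<sigma> x) \<Psi>) (sorted_list_of_set C) vac"

definition components :: "('a \<times> 'a) set \<Rightarrow> 'a set \<Rightarrow> 'a set set" where
  "components B C = {((edges B \<inter> C \<times> C)\<^sup>*) `` {x} | x. x \<in> C}"

end

theory Submission
  imports Defs "HOL-Combinatorics.Transposition"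
begin

text \<open>
  Since the energy stays finite as \<open>U \<rightarrow> \<infinity>\<close>, no site of \<open>\<Lambda>\<close> is doubly occupied in \<open>\<Phi>\<close>.
  The amplitude of \<open>\<Phi>\<close> on the configuration putting spin \<open>\<tau> x\<close> on each \<open>x \<in> C\<close> is a nonzero
  multiple of \<open>\<psi>\<^sub>C(\<tau>)\<close>. For a bond \<open>(x, y)\<close> inside \<open>C\<close>, the configuration with \<open>u(x, y)\<close> doubly
  occupied receives exactly two contributions, from \<open>\<tau>\<close> and from \<open>\<tau>\<close> with the spins of \<open>x\<close> and
  \<open>y\<close> exchanged, and they carry opposite fermionic signs; so \<open>\<psi>\<^sub>C\<close> is invariant under exchanging
  the spins along a bond, hence under any transposition inside a connected component \<open>C\<^sub>0\<close>.

  On these amplitudes \<open>S\<^sub>t\<^sub>o\<^sub>t\<^sup>2\<close> acts as the total spin of \<open>|C|\<close> spins \<open>1/2\<close>. Applying \<open>S\<^sup>+\<close> as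
  long as possible gives a highest-weight vector, with \<open>d\<close> down spins, that is still exchange
  symmetric on \<open>C\<^sub>0\<close>. In a configuration of it with the most down spins outside \<open>C\<^sub>0\<close>, raising a
  down spin of \<open>C\<^sub>0\<close> would give a nonzero amplitude of \<open>S\<^sup>+\<close> applied to the vector; so all \<open>d\<close> down
  spins lie outside \<open>C\<^sub>0\<close>, and \<open>S\<^sub>t\<^sub>o\<^sub>t = |C|/2 - d \<ge> |C|/2 - |C - C\<^sub>0|\<close>.
\<close>

section \<open>Fermionic creation operators\<close>

lemma fsign_mult_self: "fsign T m * fsign T m = 1"
  unfolding fsign_def by (simp add: power_mult_distrib[symmetric])

lemma fsign_nonzero [simp]: "fsign T m \<noteq> 0"
  unfolding fsign_def by simp

lemma numop_apply: "numop m \<Psi> S = (if m \<in> S then \<Psi> S else 0)"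
proof -
  have "m \<in> S \<Longrightarrow> insert m (S - {m}) = S" by auto
  then show ?thesis unfolding numop_def cr_def an_def
    using fsign_mult_self[of "S - {m}" m] by (auto simp: mult.assoc[symmetric])
qed

lemma site_less_irrefl: "\<not> site_less z z"
  by (cases z) auto

lemma site_less_asym: "site_less a b \<Longrightarrow> \<not> site_less b a"
  by (cases a; cases b) auto

lemma site_less_total: "a \<noteq> b \<Longrightarrow> site_less a b \<or> site_less b a"
  by (cases a; cases b) auto

lemma mode_less_total: "m \<noteq> m' \<Longrightarrow> mode_less m m' \<or> mode_less m' m"
  unfolding mode_less_def
  by (cases m; cases m'; cases "snd m"; cases "snd m'") (auto dest: site_less_total)

lemma mode_less_asym: "mode_less m m' \<Longrightarrow> \<not> mode_less m' m"
  unfolding mode_less_def using site_less_asym site_less_irrefl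
  by (cases m; cases m') fastforce

lemma fsign_insert:
  assumes "finite T" "a \<notin> T"
  shows "fsign (insert a T) m = (if mode_less a m then - fsign T m else fsign T m)"
proof -
  have "{m' \<in> insert a T. mode_less m' m} =
      (if mode_less a m then insert a {m' \<in> T. mode_less m' m} else {m' \<in> T. mode_less m' m})"
    by auto
  then show ?thesis unfolding fsign_def using assms by auto
qed

lemma fsign_same_site:
  assumes "\<forall>m\<in>T. fst m \<noteq> z"
  shows "fsign T (z, s) = fsign T (z, s')"
proof -
  have "{m' \<in> T. mode_less m' (z, s)} = {m' \<in> T. mode_less m' (z, s')}"
    using assms unfolding mode_less_def by auto
  then show ?thesis unfolding fsign_def by simp
qed

lemma cr_anticommute:
  assumes "finite S"
  shows "cr m (cr m' \<Psi>) S = - cr m' (cr m \<Psi>) S"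
proof (cases "m = m' \<or> m \<notin> S \<or> m' \<notin> S")
  case True then show ?thesis unfolding cr_def by auto
next
  case False
  then have ne: "m \<noteq> m'" and mem: "m \<in> S" "m' \<in> S" by auto
  define T where "T = S - {m, m'}"
  have fT: "finite T" using assms T_def by auto
  have "S - {m} = insert m' T" "S - {m'} = insert m T" "S - {m} - {m'} = T" "S - {m'} - {m} = T"
    "m \<notin> T" "m' \<notin> T"
    using mem ne T_def by auto
  then show ?thesis unfolding cr_def using mem ne
    using fsign_insert[OF fT, of m' m] fsign_insert[OF fT, of m m'] mode_less_total[OF ne]
      mode_less_asym[of m m']
    by auto
qed

lemma cr_sum: "cr m (\<lambda>S. \<Sum>i\<in>I. h i S) S = (\<Sum>i\<in>I. cr m (h i) S)"
  unfolding cr_def by (auto simp: sum_distrib_left)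

lemma cr_mult: "cr m (\<lambda>S. c * \<Psi> S) S = c * cr m \<Psi> S"
  unfolding cr_def by auto

lemma cre_mult: "cre L f \<sigma> (\<lambda>S. c * \<Psi> S) S = c * cre L f \<sigma> \<Psi> S"
  unfolding cre_def cr_def by (auto simp: sum_distrib_left intro!: sum.cong)

lemma cre_cong_finite:
  assumes "finite S" "\<And>S. finite S \<Longrightarrow> \<Psi> S = \<Psi>' S"
  shows "cre L f \<sigma> \<Psi> S = cre L f \<sigma> \<Psi>' S"
  unfolding cre_def cr_def using assms by (intro sum.cong) auto

lemma cre_cre_expand:
  "cre L f a (cre L g b \<Psi>) S =
     (\<Sum>z\<in>L. \<Sum>z'\<in>L. of_real (f z) * of_real (g z') * cr (z, a) (cr (z', b) \<Psi>) S)"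
  unfolding cre_def cr_sum by (simp add: cr_mult sum_distrib_left mult.assoc)

lemma cre_anticommute:
  assumes "finite S"
  shows "cre L f \<sigma> (cre L g \<sigma>' \<Psi>) S = - cre L g \<sigma>' (cre L f \<sigma> \<Psi>) S"
proof -
  have "cre L f \<sigma> (cre L g \<sigma>' \<Psi>) S =
      (\<Sum>z\<in>L. \<Sum>z'\<in>L. - (of_real (g z') * of_real (f z) * cr (z', \<sigma>') (cr (z, \<sigma>) \<Psi>) S))"
    unfolding cre_cre_expand
    by (intro sum.cong refl) (simp add: cr_anticommute[OF assms, of "(z, \<sigma>)" for z])
  also have "\<dots> = - cre L g \<sigma>' (cre L f \<sigma> \<Psi>) S"
    unfolding cre_cre_expand by (subst sum.swap) (simp add: sum_negf)
  finally show ?thesis .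
qed

lemma cre_nonzero_imp:
  assumes "cre L f \<sigma> \<Psi> S \<noteq> 0"
  shows "\<exists>z\<in>L. f z \<noteq> 0 \<and> (z, \<sigma>) \<in> S \<and> \<Psi> (S - {(z, \<sigma>)}) \<noteq> 0"
proof (rule ccontr)
  assume "\<not> ?thesis"
  then have "cre L f \<sigma> \<Psi> S = 0" unfolding cre_def cr_def by (intro sum.neutral) auto
  then show False using assms by simp
qed

lemma foldr_cre_cong:
  "\<forall>w\<in>set xs. \<tau> w = \<tau>' w \<Longrightarrow>
   foldr (\<lambda>w. cre L (a w) (\<tau> w)) xs \<Psi> = foldr (\<lambda>w. cre L (a w) (\<tau>' w)) xs \<Psi>"
  by (induction xs) auto

lemma foldr_cre_move_to_front:
  assumes "finite S"
  shows "foldr (\<lambda>w. cre L (a w) (\<tau> w)) (xs @ b # ys) \<Psi> S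
       = (-1) ^ length xs * cre L (a b) (\<tau> b) (foldr (\<lambda>w. cre L (a w) (\<tau> w)) (xs @ ys) \<Psi>) S"
  using assms
proof (induction xs arbitrary: S)
  case (Cons c xs)
  let ?F = "\<lambda>w. cre L (a w) (\<tau> w)"
  have "foldr ?F ((c # xs) @ b # ys) \<Psi> S =
      ?F c (\<lambda>S. (-1) ^ length xs * ?F b (foldr ?F (xs @ ys) \<Psi>) S) S"
    using Cons by (simp, intro cre_cong_finite) auto
  also have "\<dots> = (-1) ^ length xs * ?F c (?F b (foldr ?F (xs @ ys) \<Psi>)) S"
    by (rule cre_mult)
  also have "\<dots> = (-1) ^ length (c # xs) * ?F b (?F c (foldr ?F (xs @ ys) \<Psi>)) S"
    using cre_anticommute[OF Cons.prems, of L "a c" "\<tau> c" "a b" "\<tau> b"] by simp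
  finally show ?case by simp
qed simp

lemma foldr_cre_support:
  "distinct xs \<Longrightarrow> foldr (\<lambda>x. cre L (a x) (\<tau> x)) xs vac S \<noteq> 0 \<Longrightarrow>
   \<exists>g. S = g ` set xs \<and> (\<forall>x\<in>set xs. snd (g x) = \<tau> x \<and> a x (fst (g x)) \<noteq> 0)"
proof (induction xs arbitrary: S)
  case Nil then show ?case by (auto simp: vac_def split: if_splits)
next
  case (Cons x xs)
  from cre_nonzero_imp[OF Cons.prems(2)[simplified]] obtain z where
    z: "a x z \<noteq> 0" "(z, \<tau> x) \<in> S" "foldr (\<lambda>x. cre L (a x) (\<tau> x)) xs vac (S - {(z, \<tau> x)}) \<noteq> 0"
    by auto
  from Cons.IH[OF _ z(3)] Cons.prems(1) obtain g where
    g: "S - {(z, \<tau> x)} = g ` set xs" "\<forall>x\<in>set xs. snd (g x) = \<tau> x \<and> a x (fst (g x)) \<noteq> 0"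
    by auto
  have "x \<notin> set xs" using Cons.prems(1) by auto
  then have "S = (g(x := (z, \<tau> x))) ` set (x # xs)"
    and "\<forall>y\<in>set (x # xs). snd ((g(x := (z, \<tau> x))) y) = \<tau> y \<and> a y (fst ((g(x := (z, \<tau> x))) y)) \<noteq> 0"
    using g z by auto
  then show ?case by blast
qed

section \<open>Finite energy excludes double occupancy\<close>

lemma lattice_finite:
  assumes "lattice M B \<zeta>"
  shows "finite M" "finite (Lam M B)" "finite (modes M B)"
proof -
  show fM: "finite M" using assms unfolding lattice_def by auto
  have "B \<subseteq> M \<times> M" using assms unfolding lattice_def by auto
  then have fB: "finite B" using fM finite_subset by blast
  have "Osites B = (\<lambda>(x, y). Uo x y) ` B" "Obsites B = (\<lambda>(x, y). Ub x y) ` B"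
    unfolding Osites_def Obsites_def by auto
  then show "finite (Lam M B)" unfolding Lam_def using fM fB by auto
  then show "finite (modes M B)" unfolding modes_def by auto
qed

lemma lattice_bond_neq: "lattice M B \<zeta> \<Longrightarrow> (x, y) \<in> B \<Longrightarrow> x \<noteq> y"
  unfolding lattice_def by blast

lemma Ms_in_Lam: "x \<in> M \<Longrightarrow> Ms x \<in> Lam M B"
  unfolding Lam_def by auto

lemma Uo_in_Lam: "(x, y) \<in> B \<Longrightarrow> Uo x y \<in> Lam M B"
  unfolding Lam_def Osites_def by auto

lemma tendsto_affine_at_top_imp_slope_zero:
  fixes a d :: complex
  assumes "((\<lambda>U::real. a + of_real U * d) \<longlongrightarrow> L) at_top"
  shows "d = 0"
proof -
  have "filterlim (\<lambda>U::real. 1 + U) at_top at_top"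
    by (rule filterlim_tendsto_add_at_top[OF tendsto_const filterlim_ident])
  then have "filterlim (\<lambda>U::real. U + 1) at_top at_top"
    by (simp add: add.commute)
  from filterlim_compose[OF assms this]
  have "((\<lambda>U::real. a + of_real (U + 1) * d) \<longlongrightarrow> L) at_top"
    by (simp add: o_def)
  then have "((\<lambda>U::real. (a + of_real (U + 1) * d) - (a + of_real U * d)) \<longlongrightarrow> L - L) at_top"
    using assms by (intro tendsto_diff)
  then have "((\<lambda>U::real. d) \<longlongrightarrow> 0) at_top" by (simp add: algebra_simps)
  then show "d = 0" by (simp add: tendsto_const_iff)
qed

text \<open>The energy is affine in \<open>U\<close> with slope \<open>\<Sum>\<^sub>S |\<Phi> S|\<^sup>2 \<cdot> #(doubly occupied sites of S)\<close>;
  a finite limit forces this nonnegative slope to vanish.\<close>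

lemma finite_energy_no_double_occupancy:
  assumes lat: "lattice M B \<zeta>" and fe: "finite_energy M B \<zeta> \<mu> t \<Phi>"
    and S: "S \<subseteq> modes M B" and z: "z \<in> Lam M B" "(z, Up) \<in> S" "(z, Dn) \<in> S"
  shows "\<Phi> S = 0"
proof -
  obtain E where E: "((\<lambda>U. inner_fock M B \<Phi> (Ham M B \<zeta> \<mu> t 1 U \<Phi>)) \<longlongrightarrow> E) at_top"
    using fe unfolding finite_energy_def by force
  define P where "P = Pow (modes M B)"
  define doubles where "doubles S = card {z\<in>Lam M B. (z, Up) \<in> S \<and> (z, Dn) \<in> S}" for S
  define X where "X = (\<Sum>S\<in>P. cnj (\<Phi> S) * (complex_of_real t * (\<Sum>(x, y)\<in>edges B. \<Sum>\<sigma>\<in>{Up, Dn}.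
          cre (Lam M B) (acoef \<mu> \<zeta> B x) \<sigma> (ann (Lam M B) (acoef \<mu> \<zeta> B y) \<sigma> \<Phi>) S)
    + complex_of_real 1 * (\<Sum>v\<in>Osites B \<union> Obsites B. \<Sum>\<sigma>\<in>{Up, Dn}.
          cre (Lam M B) (bcoef \<mu> v) \<sigma> (ann (Lam M B) (bcoef \<mu> v) \<sigma> \<Phi>) S)))"
  define slope where "slope = (\<Sum>S\<in>P. cnj (\<Phi> S) * (\<Sum>z\<in>Lam M B. numop (z, Up) (numop (z, Dn) \<Phi>) S))"
  have "inner_fock M B \<Phi> (Ham M B \<zeta> \<mu> t 1 U \<Phi>) = X + of_real U * slope" for U
    unfolding inner_fock_def Ham_def X_def slope_def P_def
    by (simp add: sum.distrib sum_distrib_left distrib_left algebra_simps)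
  then have "slope = 0"
    using E by (intro tendsto_affine_at_top_imp_slope_zero[of X _ E]) simp
  moreover have "slope = of_real (\<Sum>S\<in>P. (cmod (\<Phi> S))\<^sup>2 * real (doubles S))"
    unfolding slope_def of_real_sum
  proof (rule sum.cong[OF refl])
    fix S
    have "(\<Sum>z\<in>Lam M B. numop (z, Up) (numop (z, Dn) \<Phi>) S)
        = (\<Sum>z\<in>Lam M B. if (z, Up) \<in> S \<and> (z, Dn) \<in> S then \<Phi> S else 0)"
      by (rule sum.cong) (auto simp: numop_apply)
    also have "\<dots> = of_nat (doubles S) * \<Phi> S"
      using lattice_finite(2)[OF lat] by (simp add: doubles_def sum.If_cases Int_def conj_commute)
    finally have "(\<Sum>z\<in>Lam M B. numop (z, Up) (numop (z, Dn) \<Phi>) S) = of_nat (doubles S) * \<Phi> S" .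
    then show "cnj (\<Phi> S) * (\<Sum>z\<in>Lam M B. numop (z, Up) (numop (z, Dn) \<Phi>) S) =
         complex_of_real ((cmod (\<Phi> S))\<^sup>2 * real (doubles S))"
      using complex_norm_square[of "\<Phi> S"] by (simp add: algebra_simps)
  qed
  moreover have "finite P" unfolding P_def using lattice_finite(3)[OF lat] by auto
  ultimately have "\<forall>S\<in>P. (cmod (\<Phi> S))\<^sup>2 * real (doubles S) = 0"
    by (subst sum_nonneg_eq_0_iff[symmetric]) (simp_all del: of_real_sum)
  moreover have "doubles S \<noteq> 0"
    using z lattice_finite(2)[OF lat] unfolding doubles_def by (subst card_0_eq) auto
  ultimately show ?thesis using S unfolding P_def by force
qed

section \<open>Amplitudes of the expansion in the \<open>a\<^sup>\<dagger>\<close>-basis\<close>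

definition site_config :: "('a \<Rightarrow> spin) \<Rightarrow> 'a set \<Rightarrow> 'a mode set" where
  "site_config \<tau> D = (\<lambda>x. (Ms x, \<tau> x)) ` D"

lemma Ms_in_site_config_iff: "(Ms w, s) \<in> site_config \<tau> C \<longleftrightarrow> w \<in> C \<and> \<tau> w = s"
  unfolding site_config_def by auto

lemma site_config_cong: "(\<And>x. x \<in> D \<Longrightarrow> \<tau> x = \<tau>' x) \<Longrightarrow> site_config \<tau> D = site_config \<tau>' D"
  unfolding site_config_def by auto

abbreviation anorm :: "real \<Rightarrow> nat \<Rightarrow> real" where
  "anorm \<mu> \<zeta> \<equiv> 1 / sqrt (1 + 2 * real \<zeta> * \<mu>\<^sup>2)"

lemma anorm_pos: "anorm \<mu> \<zeta> > 0"
  by (simp add: add_pos_nonneg)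

lemma acoef_Ms: "acoef \<mu> \<zeta> B x (Ms w) = (if w = x then anorm \<mu> \<zeta> else 0)"
  unfolding acoef_def by auto

lemma acoef_Ms_nonzero_imp: "acoef \<mu> \<zeta> B x (Ms w) \<noteq> 0 \<Longrightarrow> w = x"
  unfolding acoef_Ms by (auto split: if_splits)

lemma acoef_Uo_nonzero_imp: "acoef \<mu> \<zeta> B d (Uo x y) \<noteq> 0 \<Longrightarrow> d = x \<or> d = y"
  unfolding acoef_def by (auto split: if_splits)

lemma acoef_Uo:
  assumes "(x, y) \<in> B" "x \<noteq> y"
  shows "acoef \<mu> \<zeta> B x (Uo x y) = anorm \<mu> \<zeta> * \<mu>" "acoef \<mu> \<zeta> B y (Uo x y) = anorm \<mu> \<zeta> * \<mu>"
  unfolding acoef_def using assms by auto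

lemma aprod_support_mode:
  assumes "finite D" "aprod M B \<zeta> \<mu> D \<tau> S \<noteq> 0" "(z, s) \<in> S"
  obtains d where "d \<in> D" "\<tau> d = s" "acoef \<mu> \<zeta> B d z \<noteq> 0"
proof -
  obtain g where g: "S = g ` D" "\<forall>x\<in>D. snd (g x) = \<tau> x \<and> acoef \<mu> \<zeta> B x (fst (g x)) \<noteq> 0"
    using foldr_cre_support[of "sorted_list_of_set D" "Lam M B" "acoef \<mu> \<zeta> B" \<tau> S] assms(1,2)
    unfolding aprod_def by auto
  have "(z, s) \<in> g ` D" using assms(3) g(1) by simp
  then obtain d where "d \<in> D" "g d = (z, s)" by (metis imageE)
  then show ?thesis using that g(2) by force
qed

lemma aprod_support_Ms:
  assumes "finite D" "aprod M B \<zeta> \<mu> D \<tau> S \<noteq> 0" "(Ms z, s) \<in> S"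
  shows "z \<in> D" "\<tau> z = s"
proof -
  obtain d where "d \<in> D" "\<tau> d = s" "acoef \<mu> \<zeta> B d (Ms z) \<noteq> 0"
    by (rule aprod_support_mode[OF assms])
  moreover from \<open>acoef \<mu> \<zeta> B d (Ms z) \<noteq> 0\<close> have "z = d" by (rule acoef_Ms_nonzero_imp)
  ultimately show "z \<in> D" "\<tau> z = s" by simp_all
qed

lemma foldr_cre_diagonal:
  assumes "sorted xs" "distinct xs" "\<forall>x\<in>set xs. Ms x \<in> L" and fL: "finite L"
    and a: "\<And>x w. a x (Ms w) = (if w = x then N else 0)"
  shows "foldr (\<lambda>x. cre L (a x) (\<tau> x)) xs vac (site_config \<tau> (set xs)) = of_real N ^ length xs"
  using assms(1-3)
proof (induction xs)
  case Nil then show ?case by (simp add: site_config_def vac_def)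
next
  case (Cons x xs)
  let ?\<Psi> = "foldr (\<lambda>x. cre L (a x) (\<tau> x)) xs vac"
  let ?S = "site_config \<tau> (set (x # xs))"
  have lt: "\<forall>y\<in>set xs. x < y" using Cons.prems(1,2) by (auto simp: less_le)
  have xn: "x \<notin> set xs" using Cons.prems(2) by auto
  have Sd: "?S - {(Ms x, \<tau> x)} = site_config \<tau> (set xs)" unfolding site_config_def using xn by auto
  have none_less: "{m' \<in> site_config \<tau> (set xs). mode_less m' (Ms x, \<tau> x)} = {}"
    unfolding site_config_def mode_less_def using lt by auto
  have fs: "fsign (site_config \<tau> (set xs)) (Ms x, \<tau> x) = 1"
    unfolding fsign_def none_less by simp
  have "(\<Sum>z\<in>L - {Ms x}. complex_of_real (a x z) * cr (z, \<tau> x) ?\<Psi> ?S) = 0"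
    by (rule sum.neutral) (auto simp: cr_def site_config_def a)
  moreover have "Ms x \<in> L" using Cons.prems(3) by simp
  ultimately have "cre L (a x) (\<tau> x) ?\<Psi> ?S = complex_of_real (a x (Ms x)) * cr (Ms x, \<tau> x) ?\<Psi> ?S"
    unfolding cre_def[of L "a x" "\<tau> x" ?\<Psi>] by (simp add: sum.remove[OF fL])
  also have "\<dots> = of_real N * ?\<Psi> (site_config \<tau> (set xs))"
    unfolding cr_def using Sd fs a by (simp add: site_config_def)
  finally show ?case using Cons by simp
qed

lemma aprod_diagonal:
  assumes lat: "lattice M B \<zeta>" and D: "D \<subseteq> M"
  shows "aprod M B \<zeta> \<mu> D \<tau> (site_config \<tau> D) = of_real (anorm \<mu> \<zeta>) ^ card D"
proof -
  have "finite D" using lattice_finite(1)[OF lat] D finite_subset by auto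
  then show ?thesis unfolding aprod_def
    using foldr_cre_diagonal[of "sorted_list_of_set D" "Lam M B" "acoef \<mu> \<zeta> B" "anorm \<mu> \<zeta>" \<tau>] D
      lattice_finite(2)[OF lat] Ms_in_Lam[of _ M B]
    by (auto simp: acoef_Ms)
qed

lemma expansion_eq_single_block:
  fixes \<psi> :: "'a::linorder set \<Rightarrow> ('a \<Rightarrow> spin) \<Rightarrow> complex"
  assumes fM: "finite M"
    and expand: "\<Phi> = (\<lambda>S. \<Sum>D\<in>{D. D \<subseteq> M \<and> card D = Ne}.
                      \<Sum>\<tau>\<in>Pi\<^sub>E D (\<lambda>_. {Up, Dn}). \<psi> D \<tau> * aprod M B \<zeta> \<mu> D \<tau> S)"
    and C: "C \<subseteq> M" "card C = Ne" and T: "T \<subseteq> Pi\<^sub>E C (\<lambda>_. {Up, Dn})"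
    and support: "\<And>D \<tau>. D \<subseteq> M \<Longrightarrow> card D = Ne \<Longrightarrow> \<tau> \<in> Pi\<^sub>E D (\<lambda>_. {Up, Dn}) \<Longrightarrow>
                    aprod M B \<zeta> \<mu> D \<tau> S \<noteq> 0 \<Longrightarrow> D = C \<and> \<tau> \<in> T"
  shows "\<Phi> S = (\<Sum>\<tau>\<in>T. \<psi> C \<tau> * aprod M B \<zeta> \<mu> C \<tau> S)"
proof -
  let ?Ds = "{D. D \<subseteq> M \<and> card D = Ne}"
  let ?term = "\<lambda>D \<tau>. \<psi> D \<tau> * aprod M B \<zeta> \<mu> D \<tau> S"
  have fC: "finite C" using fM C(1) finite_subset by auto
  have "?term D \<tau> = 0" if "D \<in> ?Ds - {C}" "\<tau> \<in> Pi\<^sub>E D (\<lambda>_. {Up, Dn})" for D \<tau>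
    using that support[of D \<tau>] by auto
  then have "(\<Sum>D\<in>?Ds - {C}. \<Sum>\<tau>\<in>Pi\<^sub>E D (\<lambda>_. {Up, Dn}). ?term D \<tau>) = 0"
    by (intro sum.neutral ballI) simp
  moreover have "finite ?Ds" "C \<in> ?Ds" using fM C by auto
  ultimately have "\<Phi> S = (\<Sum>\<tau>\<in>Pi\<^sub>E C (\<lambda>_. {Up, Dn}). ?term C \<tau>)"
    unfolding expand by (simp only: sum.remove[OF \<open>finite ?Ds\<close> \<open>C \<in> ?Ds\<close>]) simp
  also have "\<dots> = (\<Sum>\<tau>\<in>T. ?term C \<tau>)"
  proof (rule sum.mono_neutral_right[OF _ T])
    show "finite (Pi\<^sub>E C (\<lambda>_. {Up, Dn}))" using fC by (simp add: finite_PiE)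
    show "\<forall>\<tau>\<in>Pi\<^sub>E C (\<lambda>_. {Up, Dn}) - T. ?term C \<tau> = 0"
      using support[of C] C by auto
  qed
  finally show ?thesis .
qed

lemma expansion_coefficient:
  fixes \<psi> :: "'a::linorder set \<Rightarrow> ('a \<Rightarrow> spin) \<Rightarrow> complex"
  assumes lat: "lattice M B \<zeta>"
    and expand: "\<Phi> = (\<lambda>S. \<Sum>D\<in>{D. D \<subseteq> M \<and> card D = Ne}.
                      \<Sum>\<tau>\<in>Pi\<^sub>E D (\<lambda>_. {Up, Dn}). \<psi> D \<tau> * aprod M B \<zeta> \<mu> D \<tau> S)"
    and C: "C \<subseteq> M" "card C = Ne"
  shows "\<Phi> (site_config \<tau> C) = \<psi> C (restrict \<tau> C) * of_real (anorm \<mu> \<zeta>) ^ Ne"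
proof -
  have fM: "finite M" using lattice_finite[OF lat] by auto
  have "D = C \<and> \<tau>' \<in> {restrict \<tau> C}"
    if "D \<subseteq> M" "card D = Ne" "\<tau>' \<in> Pi\<^sub>E D (\<lambda>_. {Up, Dn})"
      and nz: "aprod M B \<zeta> \<mu> D \<tau>' (site_config \<tau> C) \<noteq> 0" for D \<tau>'
  proof -
    have fD: "finite D" using that fM finite_subset by auto
    have agree: "x \<in> D \<and> \<tau>' x = \<tau> x" if "x \<in> C" for x
      using aprod_support_Ms[OF fD nz, of x "\<tau> x"] that by (simp add: Ms_in_site_config_iff)
    then have "C \<subseteq> D" by auto
    then have "D = C" using card_subset_eq[OF fD \<open>C \<subseteq> D\<close>] that(2) C(2) by simp
    moreover have "\<tau>' = restrict \<tau> C"
      using agree \<open>\<tau>' \<in> _\<close> \<open>D = C\<close> by (auto simp: PiE_def extensional_def fun_eq_iff)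
    ultimately show ?thesis by simp
  qed
  moreover have "restrict \<tau> C \<in> Pi\<^sub>E C (\<lambda>_. {Up, Dn})" by (auto intro: spin.exhaust)
  ultimately have "\<Phi> (site_config \<tau> C) =
      \<psi> C (restrict \<tau> C) * aprod M B \<zeta> \<mu> C (restrict \<tau> C) (site_config \<tau> C)"
    using expansion_eq_single_block[OF fM expand C, of "{restrict \<tau> C}"] by simp
  moreover have "aprod M B \<zeta> \<mu> C (restrict \<tau> C) (site_config \<tau> C) = of_real (anorm \<mu> \<zeta>) ^ Ne"
  proof -
    have "site_config \<tau> C = site_config (restrict \<tau> C) C" by (rule site_config_cong) auto
    then show ?thesis using aprod_diagonal[OF lat C(1), of \<mu> "restrict \<tau> C"] C(2) by simp
  qed
  ultimately show ?thesis by simp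
qed

section \<open>Exchanging the spins of a bond\<close>

lemma aprod_extract_pair:
  assumes fC: "finite C" and xy: "x \<in> C" "y \<in> C" "x \<noteq> y" and fS: "finite S"
  obtains n :: nat where
    "\<And>t. aprod M B \<zeta> \<mu> C t S = (-1) ^ n * cre (Lam M B) (acoef \<mu> \<zeta> B x) (t x)
            (cre (Lam M B) (acoef \<mu> \<zeta> B y) (t y) (aprod M B \<zeta> \<mu> (C - {x, y}) t)) S"
proof -
  let ?F = "\<lambda>t w. cre (Lam M B) (acoef \<mu> \<zeta> B w) (t w)"
  obtain xs ys where Lxy: "sorted_list_of_set C = xs @ x # ys"
    using split_list[of x "sorted_list_of_set C"] fC xy by auto
  have "y \<in> set (xs @ ys)" using Lxy xy fC by (metis Un_iff insert_iff set_append set_simps(2)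
      sorted_list_of_set.set_sorted_key_list_of_set)
  then obtain xs' ys' where Lxy2: "xs @ ys = xs' @ y # ys'" using split_list by metis
  have "sorted (xs @ x # ys)" "distinct (xs @ x # ys)" "set (xs @ x # ys) = C"
    using fC by (simp_all flip: Lxy)
  then have "sorted (xs @ ys)" "distinct (xs @ ys)" "set (xs @ ys) = C - {x}"
    by (auto simp: sorted_append)
  then have "sorted (xs' @ y # ys')" "distinct (xs' @ y # ys')" "set (xs' @ y # ys') = C - {x}"
    unfolding Lxy2 .
  then have "sorted (xs' @ ys')" "distinct (xs' @ ys')" "set (xs' @ ys') = C - {x, y}"
    by (auto simp: sorted_append)
  then have L2: "xs' @ ys' = sorted_list_of_set (C - {x, y})"
    using fC by (intro sorted_distinct_set_unique) auto
  have "aprod M B \<zeta> \<mu> C t S = (-1) ^ (length xs + length xs') *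
      ?F t x (?F t y (aprod M B \<zeta> \<mu> (C - {x, y}) t)) S" for t
  proof -
    have "aprod M B \<zeta> \<mu> C t S = (-1) ^ length xs * ?F t x (foldr (?F t) (xs @ ys) vac) S"
      unfolding aprod_def Lxy by (rule foldr_cre_move_to_front[OF fS])
    also have "?F t x (foldr (?F t) (xs @ ys) vac) S =
        ?F t x (\<lambda>S. (-1) ^ length xs' * ?F t y (foldr (?F t) (xs' @ ys') vac) S) S"
      by (rule cre_cong_finite[OF fS]) (simp only: Lxy2 foldr_cre_move_to_front)
    also have "\<dots> = (-1) ^ length xs' * ?F t x (?F t y (aprod M B \<zeta> \<mu> (C - {x, y}) t)) S"
      unfolding cre_mult aprod_def L2 ..
    finally show ?thesis by (simp add: power_add)
  qed
  then show ?thesis by (rule that)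
qed

definition bond_doublon :: "'a \<Rightarrow> 'a \<Rightarrow> ('a \<Rightarrow> spin) \<Rightarrow> 'a set \<Rightarrow> 'a mode set" where
  "bond_doublon x y \<tau> C = insert (Uo x y, Up) (insert (Uo x y, Dn) (site_config \<tau> (C - {x, y})))"

lemma spin_pair_cases: "(a::spin) \<noteq> b \<Longrightarrow> a' \<noteq> b' \<Longrightarrow> (a' = a \<and> b' = b) \<or> (a' = b \<and> b' = a)"
  by (cases a; cases b; cases a'; cases b') auto

lemma aprod_bond_doublon_support:
  assumes fD: "finite D" and card: "card D = card C" and fC: "finite C"
    and xy: "x \<in> C" "y \<in> C" and \<tau>: "\<tau> x \<noteq> \<tau> y"
    and \<tau>': "\<tau>' \<in> Pi\<^sub>E D (\<lambda>_. {Up, Dn})"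
    and nz: "aprod M B \<zeta> \<mu> D \<tau>' (bond_doublon x y \<tau> C) \<noteq> 0"
  shows "D = C \<and> (\<tau>' = restrict \<tau> C \<or> \<tau>' = restrict (\<tau> \<circ> Transposition.transpose x y) C)"
proof -
  have agree: "z \<in> D \<and> \<tau>' z = \<tau> z" if "z \<in> C - {x, y}" for z
    using aprod_support_Ms[OF fD nz, of z "\<tau> z"] that
    by (simp add: bond_doublon_def Ms_in_site_config_iff)
  have "\<exists>d\<in>D. (d = x \<or> d = y) \<and> \<tau>' d = s" for s
  proof -
    have "(Uo x y, s) \<in> bond_doublon x y \<tau> C" unfolding bond_doublon_def by (cases s) auto
    then obtain d where "d \<in> D" "\<tau>' d = s" "acoef \<mu> \<zeta> B d (Uo x y) \<noteq> 0"
      by (rule aprod_support_mode[OF fD nz])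
    then show ?thesis using acoef_Uo_nonzero_imp[of \<mu> \<zeta> B d x y] by auto
  qed
  then obtain d1 d2 where "d1 \<in> D" "d1 = x \<or> d1 = y" "\<tau>' d1 = Up"
    "d2 \<in> D" "d2 = x \<or> d2 = y" "\<tau>' d2 = Dn"
    by meson
  then have "x \<in> D" "y \<in> D" "\<tau>' x \<noteq> \<tau>' y" by auto
  with agree have "C \<subseteq> D" by auto
  then have DC: "D = C" using card_subset_eq[OF fD \<open>C \<subseteq> D\<close>] card by simp
  from \<open>\<tau>' x \<noteq> \<tau>' y\<close> have "(\<tau>' x = \<tau> x \<and> \<tau>' y = \<tau> y) \<or> (\<tau>' x = \<tau> y \<and> \<tau>' y = \<tau> x)"
    using spin_pair_cases[OF \<tau>] by blast
  then show ?thesis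
    using agree \<tau>' DC xy by (auto simp: transpose_def PiE_def extensional_def fun_eq_iff)
qed

lemma sum_sum_single:
  assumes "finite L" "u \<in> L" "\<And>z z'. z \<in> L \<Longrightarrow> z' \<in> L \<Longrightarrow> (z, z') \<noteq> (u, u) \<Longrightarrow> h z z' = 0"
  shows "(\<Sum>z\<in>L. \<Sum>z'\<in>L. h z z') = h u u"
proof -
  have "(\<Sum>z'\<in>L. h z z') = (if z = u then h u u else 0)" if "z \<in> L" for z
    using assms that by (cases "z = u") (simp_all add: sum.remove sum.neutral)
  then show ?thesis using assms by simp
qed

lemma cre_pair_on_bond_doublon:
  fixes \<mu> :: real and \<tau> :: "'a::linorder \<Rightarrow> spin"
  assumes lat: "lattice M B \<zeta>" and xy: "(x, y) \<in> B" "x \<in> C" "y \<in> C" and C: "C \<subseteq> M"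
    and ab: "a \<noteq> b"
  defines "\<Psi> \<equiv> aprod M B \<zeta> \<mu> (C - {x, y}) \<tau>"
  shows "cre (Lam M B) (acoef \<mu> \<zeta> B x) a (cre (Lam M B) (acoef \<mu> \<zeta> B y) b \<Psi>) (bond_doublon x y \<tau> C)
       = of_real (anorm \<mu> \<zeta> * \<mu>) ^ 2 * cr (Uo x y, a) (cr (Uo x y, b) \<Psi>) (bond_doublon x y \<tau> C)"
proof -
  let ?S = "bond_doublon x y \<tau> C" and ?u = "Uo x y"
  have fL: "finite (Lam M B)" using lattice_finite(2)[OF lat] .
  have fC: "finite C" using finite_subset[OF C lattice_finite(1)[OF lat]] .
  have xny: "x \<noteq> y" using lattice_bond_neq[OF lat xy(1)] .
  have no_u: "(?u, s) \<notin> S" if "\<Psi> S \<noteq> 0" for S s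
  proof
    assume u: "(?u, s) \<in> S"
    have "finite (C - {x, y})" using fC by simp
    moreover have "aprod M B \<zeta> \<mu> (C - {x, y}) \<tau> S \<noteq> 0" using that unfolding \<Psi>_def .
    ultimately obtain d where "d \<in> C - {x, y}" "\<tau> d = s" "acoef \<mu> \<zeta> B d ?u \<noteq> 0"
      by (rule aprod_support_mode[OF _ _ u])
    then show False using acoef_Uo_nonzero_imp[of \<mu> \<zeta> B d x y] by simp
  qed
  have "of_real (acoef \<mu> \<zeta> B x z) * of_real (acoef \<mu> \<zeta> B y z') * cr (z, a) (cr (z', b) \<Psi>) ?S = 0"
    if "(z, z') \<noteq> (?u, ?u)" for z z'
  proof (rule ccontr)
    assume "\<not> ?thesis"
    then have "\<Psi> (?S - {(z, a)} - {(z', b)}) \<noteq> 0"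
      unfolding cr_def by (auto split: if_splits)
    then have "(?u, s) \<notin> ?S - {(z, a)} - {(z', b)}" for s by (rule no_u)
    moreover have "(?u, Up) \<in> ?S" "(?u, Dn) \<in> ?S" unfolding bond_doublon_def by auto
    ultimately have "(?u, Up) \<in> {(z, a), (z', b)}" "(?u, Dn) \<in> {(z, a), (z', b)}" by blast+
    then show False using that ab by auto
  qed
  then have "cre (Lam M B) (acoef \<mu> \<zeta> B x) a (cre (Lam M B) (acoef \<mu> \<zeta> B y) b \<Psi>) ?S =
      of_real (acoef \<mu> \<zeta> B x ?u) * of_real (acoef \<mu> \<zeta> B y ?u) * cr (?u, a) (cr (?u, b) \<Psi>) ?S"
    unfolding cre_cre_expand using Uo_in_Lam[OF xy(1)] by (intro sum_sum_single[OF fL]) auto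
  then show ?thesis using acoef_Uo[OF xy(1) xny] by (simp add: power2_eq_square)
qed

lemma aprod_cong:
  assumes "\<And>x. x \<in> D \<Longrightarrow> \<tau> x = \<tau>' x" "finite D"
  shows "aprod M B \<zeta> \<mu> D \<tau> = aprod M B \<zeta> \<mu> D \<tau>'"
  unfolding aprod_def using assms by (intro foldr_cre_cong) simp

lemma cr_pair_bond_doublon_nonzero:
  assumes lat: "lattice M B \<zeta>" and C: "C \<subseteq> M" and ab: "a \<noteq> b"
  shows "cr (Uo x y, a) (cr (Uo x y, b) (aprod M B \<zeta> \<mu> (C - {x, y}) \<tau>)) (bond_doublon x y \<tau> C) \<noteq> 0"
proof -
  let ?S = "bond_doublon x y \<tau> C" and ?u = "Uo x y" and ?C' = "C - {x, y}"
  have S: "?S - {(?u, a)} - {(?u, b)} = site_config \<tau> ?C'" "(?u, b) \<in> ?S - {(?u, a)}" "(?u, a) \<in> ?S"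
    unfolding bond_doublon_def site_config_def using ab by (cases a; cases b; auto)+
  have "?C' \<subseteq> M" using C by auto
  then have "aprod M B \<zeta> \<mu> ?C' \<tau> (site_config \<tau> ?C') \<noteq> 0"
    using aprod_diagonal[OF lat, where \<mu> = \<mu> and \<tau> = \<tau>] anorm_pos[of \<zeta> \<mu>] by simp
  then show ?thesis unfolding cr_def using S by simp
qed

lemma expansion_at_bond_doublon:
  fixes \<psi> :: "'a::linorder set \<Rightarrow> ('a \<Rightarrow> spin) \<Rightarrow> complex"
  assumes fM: "finite M"
    and expand: "\<Phi> = (\<lambda>S. \<Sum>D\<in>{D. D \<subseteq> M \<and> card D = Ne}.
                      \<Sum>\<tau>\<in>Pi\<^sub>E D (\<lambda>_. {Up, Dn}). \<psi> D \<tau> * aprod M B \<zeta> \<mu> D \<tau> S)"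
    and C: "C \<subseteq> M" "card C = Ne" and xy: "x \<in> C" "y \<in> C" and \<tau>: "\<tau> x \<noteq> \<tau> y"
  shows "\<Phi> (bond_doublon x y \<tau> C) =
    (\<Sum>\<tau>'\<in>{restrict \<tau> C, restrict (\<tau> \<circ> Transposition.transpose x y) C}.
       \<psi> C \<tau>' * aprod M B \<zeta> \<mu> C \<tau>' (bond_doublon x y \<tau> C))"
proof (rule expansion_eq_single_block[OF fM expand C])
  have fC: "finite C" using finite_subset[OF C(1) fM] .
  show "{restrict \<tau> C, restrict (\<tau> \<circ> Transposition.transpose x y) C} \<subseteq> Pi\<^sub>E C (\<lambda>_. {Up, Dn})"
    by (auto intro: spin.exhaust)
  show "D = C \<and> \<tau>' \<in> {restrict \<tau> C, restrict (\<tau> \<circ> Transposition.transpose x y) C}"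
    if "D \<subseteq> M" "card D = Ne" "\<tau>' \<in> Pi\<^sub>E D (\<lambda>_. {Up, Dn})"
      "aprod M B \<zeta> \<mu> D \<tau>' (bond_doublon x y \<tau> C) \<noteq> 0" for D \<tau>'
    using aprod_bond_doublon_support[OF finite_subset[OF that(1) fM] _ fC xy \<tau> that(3,4)] that(2) C(2)
    by simp
qed

text \<open>The two configurations that fill \<open>u(x, y)\<close> from \<open>x\<close> and \<open>y\<close> differ in the order of the
  two creation operators at \<open>u(x, y)\<close>, hence contribute with opposite signs.\<close>

lemma aprod_bond_doublon_swap:
  assumes lat: "lattice M B \<zeta>" and mu: "\<mu> > 0" and C: "C \<subseteq> M"
    and xy: "(x, y) \<in> B" "x \<in> C" "y \<in> C" and \<tau>: "\<tau> x \<noteq> \<tau> y"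
  shows "aprod M B \<zeta> \<mu> C (restrict (\<tau> \<circ> Transposition.transpose x y) C) (bond_doublon x y \<tau> C)
       = - aprod M B \<zeta> \<mu> C (restrict \<tau> C) (bond_doublon x y \<tau> C)"
    and "aprod M B \<zeta> \<mu> C (restrict \<tau> C) (bond_doublon x y \<tau> C) \<noteq> 0"
proof -
  let ?S = "bond_doublon x y \<tau> C" and ?u = "Uo x y" and ?C' = "C - {x, y}"
  let ?G = "\<lambda>a b. cre (Lam M B) (acoef \<mu> \<zeta> B x) a
                   (cre (Lam M B) (acoef \<mu> \<zeta> B y) b (aprod M B \<zeta> \<mu> ?C' \<tau>)) ?S"
  have fC: "finite C" using finite_subset[OF C lattice_finite(1)[OF lat]] .
  have fS: "finite ?S" using fC by (simp add: bond_doublon_def site_config_def)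
  have xny: "x \<noteq> y" using lattice_bond_neq[OF lat xy(1)] .
  obtain n where n: "\<And>t. aprod M B \<zeta> \<mu> C t ?S = (-1) ^ n * cre (Lam M B) (acoef \<mu> \<zeta> B x) (t x)
      (cre (Lam M B) (acoef \<mu> \<zeta> B y) (t y) (aprod M B \<zeta> \<mu> ?C' t)) ?S"
    by (rule aprod_extract_pair[OF fC xy(2,3) xny fS, where M = M and B = B and \<zeta> = \<zeta> and \<mu> = \<mu>])
      blast
  have "aprod M B \<zeta> \<mu> ?C' t = aprod M B \<zeta> \<mu> ?C' \<tau>"
    if "t \<in> {restrict \<tau> C, restrict (\<tau> \<circ> Transposition.transpose x y) C}" for t
    using that fC by (intro aprod_cong) auto
  then have "aprod M B \<zeta> \<mu> C (restrict \<tau> C) ?S = (-1) ^ n * ?G (\<tau> x) (\<tau> y)"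
    "aprod M B \<zeta> \<mu> C (restrict (\<tau> \<circ> Transposition.transpose x y) C) ?S = (-1) ^ n * ?G (\<tau> y) (\<tau> x)"
    using n xy xny by simp_all
  moreover have "?G (\<tau> y) (\<tau> x) = - ?G (\<tau> x) (\<tau> y)" "?G (\<tau> x) (\<tau> y) \<noteq> 0"
    using cre_pair_on_bond_doublon[OF lat xy C] \<tau> mu anorm_pos[of \<zeta> \<mu>]
      cr_anticommute[OF fS, of "(?u, \<tau> y)" "(?u, \<tau> x)"] cr_pair_bond_doublon_nonzero[OF lat C \<tau>]
    by simp_all
  ultimately show "aprod M B \<zeta> \<mu> C (restrict (\<tau> \<circ> Transposition.transpose x y) C) ?S
      = - aprod M B \<zeta> \<mu> C (restrict \<tau> C) ?S"
    and "aprod M B \<zeta> \<mu> C (restrict \<tau> C) ?S \<noteq> 0"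
    by simp_all
qed

text \<open>Since \<open>u(x, y)\<close> cannot be doubly occupied, these two contributions must cancel.\<close>

lemma expansion_coefficient_swap_bond:
  fixes \<psi> :: "'a::linorder set \<Rightarrow> ('a \<Rightarrow> spin) \<Rightarrow> complex"
  assumes lat: "lattice M B \<zeta>" and mu: "\<mu> > 0" and fe: "finite_energy M B \<zeta> \<mu> t \<Phi>"
    and expand: "\<Phi> = (\<lambda>S. \<Sum>D\<in>{D. D \<subseteq> M \<and> card D = Ne}.
                      \<Sum>\<tau>\<in>Pi\<^sub>E D (\<lambda>_. {Up, Dn}). \<psi> D \<tau> * aprod M B \<zeta> \<mu> D \<tau> S)"
    and C: "C \<subseteq> M" "card C = Ne" and xy: "(x, y) \<in> B" "x \<in> C" "y \<in> C"
  shows "\<psi> C (restrict (\<tau> \<circ> Transposition.transpose x y) C) = \<psi> C (restrict \<tau> C)"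
proof (cases "\<tau> x = \<tau> y")
  case True
  then have "\<tau> \<circ> Transposition.transpose x y = \<tau>" by (auto simp: transpose_def fun_eq_iff)
  then show ?thesis by simp
next
  case \<tau>: False
  let ?S = "bond_doublon x y \<tau> C"
  let ?t1 = "restrict \<tau> C" and ?t2 = "restrict (\<tau> \<circ> Transposition.transpose x y) C"
  have "?S \<subseteq> modes M B"
    using Uo_in_Lam[OF xy(1)] C(1) Ms_in_Lam[of _ M B]
    by (auto simp: bond_doublon_def site_config_def modes_def intro: spin.exhaust)
  then have "\<Phi> ?S = 0"
    by (rule finite_energy_no_double_occupancy[OF lat fe _ Uo_in_Lam[OF xy(1)]])
      (simp_all add: bond_doublon_def)
  moreover have "?t1 \<noteq> ?t2"
  proof
    assume "?t1 = ?t2"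
    then have "?t1 x = ?t2 x" by simp
    then show False using \<tau> xy(2) by simp
  qed
  ultimately have "\<psi> C ?t1 * aprod M B \<zeta> \<mu> C ?t1 ?S + \<psi> C ?t2 * aprod M B \<zeta> \<mu> C ?t2 ?S = 0"
    using expansion_at_bond_doublon[OF lattice_finite(1)[OF lat] expand C xy(2,3) \<tau>] by simp
  then show ?thesis
    using aprod_bond_doublon_swap[OF lat mu C(1) xy \<tau>] by (simp add: algebra_simps)
qed

section \<open>Spin operators on amplitude functions\<close>

text \<open>A function \<open>h\<close> on spin configurations of \<open>C\<close> stands for the amplitudes \<open>h \<tau> = \<Psi> (site_config \<tau> C)\<close>;
  \<open>Splus_amp\<close>, \<open>Sminus_amp\<close> and \<open>Sz_weight\<close> describe how \<open>S\<^sup>+\<close>, \<open>S\<^sup>-\<close> and \<open>S\<^sup>(\<^sup>3\<^sup>)\<close> act on them, and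
  \<open>Ssq_amp = S\<^sup>-S\<^sup>+ + S\<^sup>(\<^sup>3\<^sup>) + (S\<^sup>(\<^sup>3\<^sup>))\<^sup>2\<close> is the action of \<open>S\<^sub>t\<^sub>o\<^sub>t\<^sup>2\<close>.\<close>

definition Splus_amp :: "'a set \<Rightarrow> (('a \<Rightarrow> spin) \<Rightarrow> complex) \<Rightarrow> ('a \<Rightarrow> spin) \<Rightarrow> complex" where
  "Splus_amp C h \<tau> = (\<Sum>x\<in>{x\<in>C. \<tau> x = Up}. h (\<tau>(x := Dn)))"

definition Sminus_amp :: "'a set \<Rightarrow> (('a \<Rightarrow> spin) \<Rightarrow> complex) \<Rightarrow> ('a \<Rightarrow> spin) \<Rightarrow> complex" where
  "Sminus_amp C h \<tau> = (\<Sum>x\<in>{x\<in>C. \<tau> x = Dn}. h (\<tau>(x := Up)))"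

definition Sz_weight :: "'a set \<Rightarrow> ('a \<Rightarrow> spin) \<Rightarrow> complex" where
  "Sz_weight C \<tau> = (of_nat (card {x\<in>C. \<tau> x = Up}) - of_nat (card {x\<in>C. \<tau> x = Dn})) / 2"

definition Ssq_amp :: "'a set \<Rightarrow> (('a \<Rightarrow> spin) \<Rightarrow> complex) \<Rightarrow> ('a \<Rightarrow> spin) \<Rightarrow> complex" where
  "Ssq_amp C h \<tau> = Sminus_amp C (Splus_amp C h) \<tau> + (Sz_weight C \<tau> + (Sz_weight C \<tau>)\<^sup>2) * h \<tau>"

lemma cr_an_site_config:
  assumes x: "x \<in> C" "\<tau> x = s" and ss: "s \<noteq> s'"
  shows "cr (Ms x, s) (an (Ms x, s') \<Psi>) (site_config \<tau> C) = \<Psi> (site_config (\<tau>(x := s')) C)"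
proof -
  let ?T = "site_config \<tau> C - {(Ms x, s)}"
  have m: "(Ms x, s) \<in> site_config \<tau> C" using x by (simp add: Ms_in_site_config_iff)
  have n: "(Ms x, s') \<notin> ?T" using x ss by (auto simp: Ms_in_site_config_iff)
  have ins: "insert (Ms x, s') ?T = site_config (\<tau>(x := s')) C"
    using x unfolding site_config_def by auto
  have "\<forall>m\<in>?T. fst m \<noteq> Ms x" using x unfolding site_config_def by auto
  then have "fsign ?T (Ms x, s) * fsign ?T (Ms x, s') = 1"
    using fsign_same_site[of ?T "Ms x" s s'] fsign_mult_self by simp
  then show ?thesis unfolding cr_def an_def using m n ins
    by (simp add: mult.assoc[symmetric])
qed

lemma sum_over_site_config:
  assumes fL: "finite L" and CL: "Ms ` C \<subseteq> L"
    and zero: "\<And>z. z \<in> L \<Longrightarrow> (z, s) \<notin> site_config \<tau> C \<Longrightarrow> h z = 0"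
  shows "(\<Sum>z\<in>L. h z) = (\<Sum>x\<in>{x\<in>C. \<tau> x = s}. h (Ms x))"
proof -
  have "(\<Sum>z\<in>L. h z) = (\<Sum>z\<in>Ms ` {x\<in>C. \<tau> x = s}. h z)"
    using CL zero by (intro sum.mono_neutral_right[OF fL]) (auto simp: site_config_def)
  also have "\<dots> = (\<Sum>x\<in>{x\<in>C. \<tau> x = s}. h (Ms x))"
    by (subst sum.reindex) (auto simp: inj_on_def)
  finally show ?thesis .
qed

lemma Splus_site_config:
  assumes "finite L" "Ms ` C \<subseteq> L"
  shows "Splus L \<Psi> (site_config \<tau> C) = Splus_amp C (\<lambda>\<tau>. \<Psi> (site_config \<tau> C)) \<tau>"
proof -
  have "Splus L \<Psi> (site_config \<tau> C) =
      (\<Sum>x\<in>{x\<in>C. \<tau> x = Up}. cr (Ms x, Up) (an (Ms x, Dn) \<Psi>) (site_config \<tau> C))"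
    unfolding Splus_def by (rule sum_over_site_config[OF assms]) (simp add: cr_def)
  then show ?thesis unfolding Splus_amp_def by (simp add: cr_an_site_config)
qed

lemma Sminus_site_config:
  assumes "finite L" "Ms ` C \<subseteq> L"
  shows "Sminus L \<Psi> (site_config \<tau> C) = Sminus_amp C (\<lambda>\<tau>. \<Psi> (site_config \<tau> C)) \<tau>"
proof -
  have "Sminus L \<Psi> (site_config \<tau> C) =
      (\<Sum>x\<in>{x\<in>C. \<tau> x = Dn}. cr (Ms x, Dn) (an (Ms x, Up) \<Psi>) (site_config \<tau> C))"
    unfolding Sminus_def by (rule sum_over_site_config[OF assms]) (simp add: cr_def)
  then show ?thesis unfolding Sminus_amp_def by (simp add: cr_an_site_config)
qed

lemma S3_site_config:
  assumes "finite L" "Ms ` C \<subseteq> L"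
  shows "S3 L \<Psi> (site_config \<tau> C) = Sz_weight C \<tau> * \<Psi> (site_config \<tau> C)"
proof -
  have count: "(\<Sum>z\<in>L. if (z, s) \<in> site_config \<tau> C then \<Psi> (site_config \<tau> C) else 0)
      = (\<Sum>x\<in>{x\<in>C. \<tau> x = s}. \<Psi> (site_config \<tau> C))" for s
    by (rule trans[OF sum_over_site_config[OF assms]]) (auto simp: Ms_in_site_config_iff)
  have "S3 L \<Psi> (site_config \<tau> C) =
      (\<Sum>z\<in>L. if (z, Up) \<in> site_config \<tau> C then \<Psi> (site_config \<tau> C) else 0) / 2
      - (\<Sum>z\<in>L. if (z, Dn) \<in> site_config \<tau> C then \<Psi> (site_config \<tau> C) else 0) / 2"
    unfolding S3_def numop_apply
    by (simp add: sum_subtractf sum_divide_distrib[symmetric] diff_divide_distrib)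
  then show ?thesis unfolding count Sz_weight_def by (simp add: algebra_simps diff_divide_distrib)
qed

lemma Splus_amp_add: "Splus_amp C (\<lambda>\<tau>. f \<tau> + g \<tau>) \<tau> = Splus_amp C f \<tau> + Splus_amp C g \<tau>"
  unfolding Splus_amp_def by (simp add: sum.distrib)

lemma Splus_amp_diff: "Splus_amp C (\<lambda>\<tau>. f \<tau> - g \<tau>) \<tau> = Splus_amp C f \<tau> - Splus_amp C g \<tau>"
  unfolding Splus_amp_def by (simp add: sum_subtractf)

lemma Splus_amp_mult: "Splus_amp C (\<lambda>\<tau>. c * f \<tau>) \<tau> = c * Splus_amp C f \<tau>"
  unfolding Splus_amp_def by (simp add: sum_distrib_left)

lemma Splus_amp_divide: "Splus_amp C (\<lambda>\<tau>. f \<tau> / c) \<tau> = Splus_amp C f \<tau> / c"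
  unfolding Splus_amp_def by (simp add: sum_divide_distrib)

lemma Sminus_amp_add: "Sminus_amp C (\<lambda>\<tau>. f \<tau> + g \<tau>) \<tau> = Sminus_amp C f \<tau> + Sminus_amp C g \<tau>"
  unfolding Sminus_amp_def by (simp add: sum.distrib)

lemma Sminus_amp_diff: "Sminus_amp C (\<lambda>\<tau>. f \<tau> - g \<tau>) \<tau> = Sminus_amp C f \<tau> - Sminus_amp C g \<tau>"
  unfolding Sminus_amp_def by (simp add: sum_subtractf)

lemma Sminus_amp_divide: "Sminus_amp C (\<lambda>\<tau>. f \<tau> / c) \<tau> = Sminus_amp C f \<tau> / c"
  unfolding Sminus_amp_def by (simp add: sum_divide_distrib)

lemma Sz_weight_flip_dn:
  assumes "finite C" "x \<in> C" "\<tau> x = Up"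
  shows "Sz_weight C (\<tau>(x := Dn)) = Sz_weight C \<tau> - 1"
proof -
  have "{z\<in>C. (\<tau>(x := Dn)) z = Dn} = insert x {z\<in>C. \<tau> z = Dn}"
    "{z\<in>C. (\<tau>(x := Dn)) z = Up} = {z\<in>C. \<tau> z = Up} - {x}"
    "x \<notin> {z\<in>C. \<tau> z = Dn}" "x \<in> {z\<in>C. \<tau> z = Up}"
    using assms by auto
  moreover have "card {z\<in>C. \<tau> z = Up} > 0" using assms by (auto simp: card_gt_0_iff)
  ultimately show ?thesis unfolding Sz_weight_def using assms(1)
    by (simp add: of_nat_diff field_simps)
qed

lemma sum_flip_back:
  assumes "finite C" "x \<in> C" "\<tau> x = s" "s \<noteq> s'"
  shows "(\<Sum>y\<in>{y\<in>C. (\<tau>(x := s')) y = s'}. h (\<tau>(x := s', y := s))) =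
         h \<tau> + (\<Sum>y\<in>{y\<in>C. \<tau> y = s'}. h (\<tau>(x := s', y := s)))"
proof -
  have "{y\<in>C. (\<tau>(x := s')) y = s'} = insert x {y\<in>C. \<tau> y = s'}" "x \<notin> {y\<in>C. \<tau> y = s'}"
    "\<tau>(x := s', x := s) = \<tau>"
    using assms by auto
  then show ?thesis using assms(1) by simp
qed

lemma Splus_Sminus_amp_commutator:
  assumes fC: "finite C"
  shows "Splus_amp C (Sminus_amp C h) \<tau> = Sminus_amp C (Splus_amp C h) \<tau> + 2 * Sz_weight C \<tau> * h \<tau>"
proof -
  let ?U = "{x\<in>C. \<tau> x = Up}" and ?D = "{x\<in>C. \<tau> x = Dn}"
  let ?X = "\<Sum>x\<in>?U. \<Sum>y\<in>?D. h (\<tau>(x := Dn, y := Up))"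
  have "Splus_amp C (Sminus_amp C h) \<tau> = (\<Sum>x\<in>?U. h \<tau> + (\<Sum>y\<in>?D. h (\<tau>(x := Dn, y := Up))))"
    unfolding Splus_amp_def Sminus_amp_def by (intro sum.cong refl, rule sum_flip_back[OF fC]) auto
  also have "\<dots> = of_nat (card ?U) * h \<tau> + ?X" by (simp add: sum.distrib)
  finally have pm: "Splus_amp C (Sminus_amp C h) \<tau> = of_nat (card ?U) * h \<tau> + ?X" .
  have "Sminus_amp C (Splus_amp C h) \<tau> = (\<Sum>y\<in>?D. h \<tau> + (\<Sum>x\<in>?U. h (\<tau>(y := Up, x := Dn))))"
    unfolding Splus_amp_def Sminus_amp_def by (intro sum.cong refl, rule sum_flip_back[OF fC]) auto
  also have "\<dots> = of_nat (card ?D) * h \<tau> + (\<Sum>y\<in>?D. \<Sum>x\<in>?U. h (\<tau>(y := Up, x := Dn)))"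
    by (simp add: sum.distrib)
  also have "(\<Sum>y\<in>?D. \<Sum>x\<in>?U. h (\<tau>(y := Up, x := Dn))) = (\<Sum>y\<in>?D. \<Sum>x\<in>?U. h (\<tau>(x := Dn, y := Up)))"
  proof (intro sum.cong refl)
    fix y x assume "y \<in> ?D" "x \<in> ?U"
    then have "x \<noteq> y" by auto
    then show "h (\<tau>(y := Up, x := Dn)) = h (\<tau>(x := Dn, y := Up))" by (simp add: fun_upd_twist)
  qed
  also have "\<dots> = ?X" by (rule sum.swap)
  finally have mp: "Sminus_amp C (Splus_amp C h) \<tau> = of_nat (card ?D) * h \<tau> + ?X" .
  show ?thesis unfolding pm mp Sz_weight_def by (simp add: field_simps)
qed

lemma Ssq_amp_Splus_amp_commute:
  assumes fC: "finite C"
  shows "Ssq_amp C (Splus_amp C h) \<tau> = Splus_amp C (Ssq_amp C h) \<tau>"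
proof -
  have "Splus_amp C (\<lambda>\<tau>. (Sz_weight C \<tau> + (Sz_weight C \<tau>)\<^sup>2) * h \<tau>) \<tau> =
      ((Sz_weight C \<tau> - 1) + (Sz_weight C \<tau> - 1)\<^sup>2) * Splus_amp C h \<tau>"
    unfolding Splus_amp_def sum_distrib_left using fC by (intro sum.cong refl) (simp add: Sz_weight_flip_dn)
  then show ?thesis
    unfolding Ssq_amp_def Splus_amp_add Splus_Sminus_amp_commutator[OF fC]
    by (simp add: algebra_simps power2_eq_square)
qed

lemma Stot2_site_config:
  assumes "finite L" "Ms ` C \<subseteq> L" and fC: "finite C"
  shows "Stot2 L \<Phi> (site_config \<tau> C) = Ssq_amp C (\<lambda>\<tau>. \<Phi> (site_config \<tau> C)) \<tau>"
proof -
  let ?h = "\<lambda>\<tau>. \<Phi> (site_config \<tau> C)"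
  have "Stot2 L \<Phi> (site_config \<tau> C) =
      (Splus_amp C (Sminus_amp C ?h) \<tau> + Sminus_amp C (Splus_amp C ?h) \<tau>) / 2
      + Sz_weight C \<tau> * (Sz_weight C \<tau> * ?h \<tau>)"
    unfolding Stot2_def S1_def S2_def
    by (simp add: Splus_site_config[OF assms(1,2)] Sminus_site_config[OF assms(1,2)]
        S3_site_config[OF assms(1,2)] Splus_amp_add Splus_amp_diff Splus_amp_divide
        Sminus_amp_add Sminus_amp_diff Sminus_amp_divide field_simps)
  also have "\<dots> = Ssq_amp C ?h \<tau>"
    using Splus_Sminus_amp_commutator[OF fC, of ?h \<tau>]
    by (simp add: Ssq_amp_def field_simps power2_eq_square)
  finally show ?thesis .
qed

section \<open>Highest weights of exchange-symmetric amplitudes\<close>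

definition num_down :: "'a set \<Rightarrow> ('a \<Rightarrow> spin) \<Rightarrow> nat" where
  "num_down C \<tau> = card {x\<in>C. \<tau> x = Dn}"

lemma num_down_flip_dn:
  "finite C \<Longrightarrow> x \<in> C \<Longrightarrow> \<tau> x = Up \<Longrightarrow> num_down C (\<tau>(x := Dn)) = Suc (num_down C \<tau>)"
proof -
  assume a: "finite C" "x \<in> C" "\<tau> x = Up"
  then have "{z\<in>C. (\<tau>(x := Dn)) z = Dn} = insert x {z\<in>C. \<tau> z = Dn}" by auto
  then show ?thesis unfolding num_down_def using a by simp
qed

lemma num_down_flip_up:
  "finite C \<Longrightarrow> x \<in> C \<Longrightarrow> \<tau> x = Dn \<Longrightarrow> Suc (num_down C (\<tau>(x := Up))) = num_down C \<tau>"
proof -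
  assume a: "finite C" "x \<in> C" "\<tau> x = Dn"
  then have "{z\<in>C. \<tau> z = Dn} = insert x {z\<in>C. (\<tau>(x := Up)) z = Dn}" by auto
  then show ?thesis unfolding num_down_def using a by simp
qed

lemma Sz_weight_num_down:
  assumes "finite C"
  shows "Sz_weight C \<tau> = (of_nat (card C) - 2 * of_nat (num_down C \<tau>)) / 2"
proof -
  have "C = {x\<in>C. \<tau> x = Up} \<union> {x\<in>C. \<tau> x = Dn}" by (auto intro: spin.exhaust)
  moreover have "{x\<in>C. \<tau> x = Up} \<inter> {x\<in>C. \<tau> x = Dn} = {}" by auto
  ultimately have "card C = card {x\<in>C. \<tau> x = Up} + card {x\<in>C. \<tau> x = Dn}"
    using assms by (metis card_Un_disjoint finite_Un)
  then show ?thesis unfolding Sz_weight_def num_down_def by (simp add: field_simps)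
qed

lemma Splus_amp_num_down_restrict:
  assumes "finite C"
  shows "Splus_amp C (\<lambda>\<tau>. if num_down C \<tau> = d then f \<tau> else 0) \<tau> =
         (if Suc (num_down C \<tau>) = d then Splus_amp C f \<tau> else 0)"
  unfolding Splus_amp_def using num_down_flip_dn[OF assms] by (auto intro!: sum.neutral)

lemma Sminus_amp_num_down_restrict:
  assumes "finite C"
  shows "Sminus_amp C (\<lambda>\<tau>. if Suc (num_down C \<tau>) = d then f \<tau> else 0) \<tau> =
         (if num_down C \<tau> = d then Sminus_amp C f \<tau> else 0)"
  unfolding Sminus_amp_def using num_down_flip_up[OF assms] by (auto intro!: sum.neutral)

lemma Ssq_amp_num_down_restrict:
  assumes fC: "finite C"
  shows "Ssq_amp C (\<lambda>\<tau>. if num_down C \<tau> = d then f \<tau> else 0) \<tau> =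
         (if num_down C \<tau> = d then Ssq_amp C f \<tau> else 0)"
proof -
  have "Splus_amp C (\<lambda>\<tau>. if num_down C \<tau> = d then f \<tau> else 0) =
      (\<lambda>\<tau>. if Suc (num_down C \<tau>) = d then Splus_amp C f \<tau> else 0)"
    using Splus_amp_num_down_restrict[OF fC] by auto
  then show ?thesis
    unfolding Ssq_amp_def using Sminus_amp_num_down_restrict[OF fC, of d "Splus_amp C f" \<tau>] by simp
qed

definition swap_invariant :: "'a set \<Rightarrow> (('a \<Rightarrow> spin) \<Rightarrow> complex) \<Rightarrow> bool" where
  "swap_invariant C0 h \<longleftrightarrow> (\<forall>x\<in>C0. \<forall>y\<in>C0. \<forall>\<tau>. h (\<tau> \<circ> Transposition.transpose x y) = h \<tau>)"

lemma spin_level_set_transpose: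
  assumes "x \<in> C" "y \<in> C"
  shows "{z\<in>C. (\<tau> \<circ> Transposition.transpose x y) z = s} = Transposition.transpose x y ` {z\<in>C. \<tau> z = s}"
  unfolding set_eq_iff in_transpose_image_iff using assms by (auto simp: transpose_def)

lemma num_down_transpose:
  assumes "x \<in> C" "y \<in> C"
  shows "num_down C (\<tau> \<circ> Transposition.transpose x y) = num_down C \<tau>"
  unfolding num_down_def spin_level_set_transpose[OF assms] by (simp add: card_image)

lemma swap_invariant_num_down_restrict:
  assumes "C0 \<subseteq> C" "swap_invariant C0 f"
  shows "swap_invariant C0 (\<lambda>\<tau>. if num_down C \<tau> = d then f \<tau> else 0)"
  using assms num_down_transpose[of _ C] unfolding swap_invariant_def by (simp add: subset_iff)

lemma swap_invariant_Splus_amp: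
  assumes C0: "C0 \<subseteq> C" and h: "swap_invariant C0 h"
  shows "swap_invariant C0 (Splus_amp C h)"
  unfolding swap_invariant_def
proof (intro ballI allI)
  fix x y \<tau> assume x: "x \<in> C0" and y: "y \<in> C0"
  let ?p = "Transposition.transpose x y"
  have upd: "(\<tau> \<circ> ?p)(?p w := Dn) = \<tau>(w := Dn) \<circ> ?p" for w
    by (simp add: fun_eq_iff) (metis transpose_involutory)
  have "x \<in> C" "y \<in> C" using x y C0 by auto
  then have "Splus_amp C h (\<tau> \<circ> ?p) = (\<Sum>z\<in>?p ` {z\<in>C. \<tau> z = Up}. h ((\<tau> \<circ> ?p)(z := Dn)))"
    unfolding Splus_amp_def by (simp only: spin_level_set_transpose)
  also have "\<dots> = (\<Sum>w\<in>{z\<in>C. \<tau> z = Up}. h (\<tau>(w := Dn) \<circ> ?p))"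
    by (simp add: sum.reindex upd)
  also have "\<dots> = Splus_amp C h \<tau>"
    unfolding Splus_amp_def using h x y unfolding swap_invariant_def by simp
  finally show "Splus_amp C h (\<tau> \<circ> ?p) = Splus_amp C h \<tau>" .
qed

text \<open>By exchange symmetry every term of \<open>S\<^sup>+\<close> that lowers a spin of \<open>C0\<close> equals \<open>w \<tau>\<close>.\<close>

lemma Splus_amp_raise_in_block:
  assumes fC: "finite C" and C0: "C0 \<subseteq> C" and w: "swap_invariant C0 w"
    and x: "x \<in> C0" "\<tau> x = Dn"
    and outside: "\<And>y. y \<in> C - C0 \<Longrightarrow> \<tau> y = Up \<Longrightarrow> w (\<tau>(x := Up, y := Dn)) = 0"
  shows "Splus_amp C w (\<tau>(x := Up)) = of_nat (card {y\<in>C0. (\<tau>(x := Up)) y = Up}) * w \<tau>"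
proof -
  let ?\<tau> = "\<tau>(x := Up)"
  have "Splus_amp C w ?\<tau> = (\<Sum>y\<in>{y\<in>C0. ?\<tau> y = Up}. w \<tau>)"
    unfolding Splus_amp_def
  proof (rule sum.mono_neutral_cong_right)
    show "finite {y\<in>C. ?\<tau> y = Up}" using fC by auto
    show "{y\<in>C0. ?\<tau> y = Up} \<subseteq> {y\<in>C. ?\<tau> y = Up}" using C0 by auto
    show "\<forall>y\<in>{y\<in>C. ?\<tau> y = Up} - {y\<in>C0. ?\<tau> y = Up}. w (?\<tau>(y := Dn)) = 0"
      using outside x by (auto split: if_splits)
    show "w (?\<tau>(y := Dn)) = w \<tau>" if y: "y \<in> {y\<in>C0. ?\<tau> y = Up}" for y
    proof (cases "y = x")
      case True
      then show ?thesis using x by (simp add: fun_upd_idem)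
    next
      case False
      then have "?\<tau>(y := Dn) = \<tau> \<circ> Transposition.transpose x y"
        using x y by (auto simp: fun_eq_iff transpose_def)
      then show ?thesis using w x y unfolding swap_invariant_def by simp
    qed
  qed
  then show ?thesis by simp
qed

lemma highest_weight_num_down_le:
  assumes fC: "finite C" and C0: "C0 \<subseteq> C" and w: "swap_invariant C0 w"
    and top: "\<And>\<tau>. Splus_amp C w \<tau> = 0"
    and hom: "\<And>\<tau>. w \<tau> \<noteq> 0 \<Longrightarrow> num_down C \<tau> = d"
    and nz: "w \<tau>0 \<noteq> 0"
  shows "d \<le> card (C - C0)"
proof (rule ccontr)
  assume d: "\<not> d \<le> card (C - C0)"
  define outer_downs where "outer_downs \<tau> = card {x\<in>C - C0. \<tau> x = Dn}" for \<tau>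
  have "outer_downs \<tau> < Suc (card (C - C0))" for \<tau>
    unfolding outer_downs_def using fC by (simp add: less_Suc_eq_le) (intro card_mono; auto)
  then obtain \<tau> where \<tau>: "w \<tau> \<noteq> 0" and max: "\<And>\<tau>'. w \<tau>' \<noteq> 0 \<Longrightarrow> outer_downs \<tau>' \<le> outer_downs \<tau>"
    using ex_has_greatest_nat[of "\<lambda>\<tau>. w \<tau> \<noteq> 0" \<tau>0 outer_downs] nz by blast
  have "{x\<in>C. \<tau> x = Dn} = {x\<in>C0. \<tau> x = Dn} \<union> {x\<in>C - C0. \<tau> x = Dn}" using C0 by auto
  then have "num_down C \<tau> = card {x\<in>C0. \<tau> x = Dn} + outer_downs \<tau>"
    unfolding num_down_def outer_downs_def using fC finite_subset[OF C0 fC]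
    by (subst card_Un_disjoint[symmetric]) auto
  moreover have "outer_downs \<tau> \<le> card (C - C0)"
    unfolding outer_downs_def using fC by (intro card_mono) auto
  ultimately have "card {x\<in>C0. \<tau> x = Dn} \<noteq> 0" using hom[OF \<tau>] d by linarith
  then obtain x where x: "x \<in> C0" "\<tau> x = Dn" by (metis (mono_tags, lifting) card.empty empty_Collect_eq)
  have "w (\<tau>(x := Up, y := Dn)) = 0" if y: "y \<in> C - C0" "\<tau> y = Up" for y
  proof (rule ccontr)
    assume "w (\<tau>(x := Up, y := Dn)) \<noteq> 0"
    moreover have "{z\<in>C - C0. (\<tau>(x := Up, y := Dn)) z = Dn} = insert y {z\<in>C - C0. \<tau> z = Dn}"
      using x y by auto
    then have "outer_downs (\<tau>(x := Up, y := Dn)) = Suc (outer_downs \<tau>)"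
      unfolding outer_downs_def using fC y by simp
    ultimately show False using max by fastforce
  qed
  then have "Splus_amp C w (\<tau>(x := Up)) = of_nat (card {y\<in>C0. (\<tau>(x := Up)) y = Up}) * w \<tau>"
    by (rule Splus_amp_raise_in_block[where \<tau> = \<tau>, OF fC C0 w x])
  moreover have "card {y\<in>C0. (\<tau>(x := Up)) y = Up} \<noteq> 0"
    using x finite_subset[OF C0 fC] by auto
  ultimately show False using top \<tau> by simp
qed

lemma Splus_amp_iterate:
  fixes d :: nat
  assumes fC: "finite C" and C0: "C0 \<subseteq> C"
    and eig: "\<And>\<tau>. Ssq_amp C f \<tau> = E * f \<tau>" and sy: "swap_invariant C0 f"
  defines "g k \<equiv> (Splus_amp C ^^ k) (\<lambda>\<tau>. if num_down C \<tau> = d then f \<tau> else 0)"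
  shows "(\<forall>\<tau>. Ssq_amp C (g k) \<tau> = E * g k \<tau>) \<and> (\<forall>\<tau>. g k \<tau> \<noteq> 0 \<longrightarrow> num_down C \<tau> + k = d)
    \<and> swap_invariant C0 (g k)"
proof (induction k)
  case 0
  show ?case
    unfolding g_def using Ssq_amp_num_down_restrict[OF fC] eig swap_invariant_num_down_restrict[OF C0 sy]
    by simp
next
  case (Suc k)
  have g: "g (Suc k) = Splus_amp C (g k)" unfolding g_def by simp
  have "Ssq_amp C (g k) = (\<lambda>\<tau>. E * g k \<tau>)" using Suc.IH by auto
  then have "Ssq_amp C (g (Suc k)) \<tau> = E * g (Suc k) \<tau>" for \<tau>
    unfolding g Ssq_amp_Splus_amp_commute[OF fC] by (simp add: Splus_amp_mult)
  moreover have "num_down C \<tau> + Suc k = d" if "g (Suc k) \<tau> \<noteq> 0" for \<tau>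
  proof -
    from that obtain x where "x \<in> C" "\<tau> x = Up" "g k (\<tau>(x := Dn)) \<noteq> 0"
      unfolding g Splus_amp_def by (metis (mono_tags, lifting) mem_Collect_eq sum.neutral)
    moreover from this(3) have "num_down C (\<tau>(x := Dn)) + k = d" using Suc.IH by blast
    ultimately show ?thesis using num_down_flip_dn[OF fC] by simp
  qed
  moreover have "swap_invariant C0 (g (Suc k))"
    unfolding g using Suc.IH swap_invariant_Splus_amp[OF C0] by blast
  ultimately show ?case by blast
qed

text \<open>Raising an exchange-symmetric eigenfunction of \<open>S\<^sup>2\<close> with \<open>S\<^sup>+\<close> as often as possible yields a
  highest-weight vector with the same eigenvalue \<open>m(m + 1)\<close>, where \<open>m\<close> is its \<open>S\<^sup>(\<^sup>3\<^sup>)\<close>-weight.\<close>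

lemma swap_invariant_eigenvalue:
  assumes fC: "finite C" and C0: "C0 \<subseteq> C"
    and eig: "\<And>\<tau>. Ssq_amp C f \<tau> = E * f \<tau>" and nz: "f \<sigma> \<noteq> 0" and sy: "swap_invariant C0 f"
  obtains d where "d \<le> card (C - C0)"
    "E = (of_nat (card C) - 2 * of_nat d) / 2 + ((of_nat (card C) - 2 * of_nat d) / 2)\<^sup>2"
proof -
  define d0 where "d0 = num_down C \<sigma>"
  define g where "g k = (Splus_amp C ^^ k) (\<lambda>\<tau>. if num_down C \<tau> = d0 then f \<tau> else 0)" for k
  note inv = Splus_amp_iterate[OF fC C0 eig sy, where d = d0, folded g_def]
  have "\<exists>\<tau>. g 0 \<tau> \<noteq> 0" using nz unfolding g_def d0_def by auto
  moreover have "k < Suc d0" if "\<exists>\<tau>. g k \<tau> \<noteq> 0" for k using that inv[of k] by force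
  ultimately obtain k where k: "\<exists>\<tau>. g k \<tau> \<noteq> 0" and kmax: "\<And>k'. \<exists>\<tau>. g k' \<tau> \<noteq> 0 \<Longrightarrow> k' \<le> k"
    using ex_has_greatest_nat[of "\<lambda>k. \<exists>\<tau>. g k \<tau> \<noteq> 0" 0 id "Suc d0"] by auto
  from k obtain \<tau> where \<tau>: "g k \<tau> \<noteq> 0" by blast
  have top: "Splus_amp C (g k) \<tau>' = 0" for \<tau>'
    using kmax[of "Suc k"] unfolding g_def by fastforce
  have hom: "num_down C \<tau>' = num_down C \<tau>" if "g k \<tau>' \<noteq> 0" for \<tau>'
  proof -
    have "\<forall>\<tau>. g k \<tau> \<noteq> 0 \<longrightarrow> num_down C \<tau> + k = d0" using inv[of k] by blast
    then have "num_down C \<tau>' + k = d0" "num_down C \<tau> + k = d0" using that \<tau> by blast+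
    then show ?thesis by simp
  qed
  have "num_down C \<tau> \<le> card (C - C0)"
    using highest_weight_num_down_le[OF fC C0 _ top hom \<tau>] inv by blast
  moreover have "Ssq_amp C (g k) \<tau> = (Sz_weight C \<tau> + (Sz_weight C \<tau>)\<^sup>2) * g k \<tau>"
    unfolding Ssq_amp_def Sminus_amp_def top by simp
  then have "E = Sz_weight C \<tau> + (Sz_weight C \<tau>)\<^sup>2" using inv[of k] \<tau> by simp
  ultimately show ?thesis using that Sz_weight_num_down[OF fC, of \<tau>] by simp
qed

section \<open>Exchange symmetry on connected components\<close>

lemma swap_invariant_rtrancl:
  assumes edge: "\<And>a b \<tau>. (a, b) \<in> E \<Longrightarrow> h (\<tau> \<circ> Transposition.transpose a b) = h \<tau>"
    and path: "(x, y) \<in> E\<^sup>*"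
  shows "h (\<tau> \<circ> Transposition.transpose x y) = h \<tau>"
  using path
proof (induction arbitrary: \<tau> rule: rtrancl_induct)
  case (step w y)
  consider "y = x" | "w = x" | "w = y" | "y \<noteq> x" "w \<noteq> x" "w \<noteq> y" by blast
  then show ?case
  proof cases
    case 1
    then show ?thesis by simp
  next
    case 2
    with step.hyps(2) have "(x, y) \<in> E" by simp
    then show ?thesis by (rule edge)
  next
    case 3
    then show ?thesis using step.IH by simp
  next
    case 4
    let ?t = "Transposition.transpose"
    have "\<tau> \<circ> ?t x y = ((\<tau> \<circ> ?t x w) \<circ> ?t w y) \<circ> ?t x w"
      using swap_triple[of x y w \<tau>] 4 by (simp add: comp_assoc)
    then have "h (\<tau> \<circ> ?t x y) = h (((\<tau> \<circ> ?t x w) \<circ> ?t w y) \<circ> ?t x w)" by (rule arg_cong)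
    also have "\<dots> = h ((\<tau> \<circ> ?t x w) \<circ> ?t w y)" by (rule step.IH)
    also have "\<dots> = h (\<tau> \<circ> ?t x w)" by (rule edge[OF step.hyps(2)])
    also have "\<dots> = h \<tau>" by (rule step.IH)
    finally show ?thesis .
  qed
qed simp

lemma component_subset: "C0 \<in> components B C \<Longrightarrow> C0 \<subseteq> C"
proof -
  have "(x, y) \<in> (edges B \<inter> C \<times> C)\<^sup>* \<Longrightarrow> x \<in> C \<Longrightarrow> y \<in> C" for x y
    by (induction rule: rtrancl_induct) auto
  then show "C0 \<in> components B C \<Longrightarrow> C0 \<subseteq> C" unfolding components_def by auto
qed

lemma equiv_components: "equiv UNIV ((edges B \<inter> C \<times> C)\<^sup>*)"
proof -
  have "sym (edges B \<inter> C \<times> C)" unfolding edges_def sym_def by auto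
  then show ?thesis by (simp add: equiv_def refl_rtrancl trans_rtrancl sym_rtrancl)
qed

lemma component_connected:
  assumes "C0 \<in> components B C" "x \<in> C0" "y \<in> C0"
  shows "(x, y) \<in> (edges B \<inter> C \<times> C)\<^sup>*"
proof -
  let ?R = "(edges B \<inter> C \<times> C)\<^sup>*"
  obtain x0 where "C0 = ?R `` {x0}" using assms(1) unfolding components_def by auto
  then have "(x0, x) \<in> ?R" "(x0, y) \<in> ?R" using assms(2,3) by auto
  moreover have "sym ?R" "trans ?R" using equiv_components[of B C] by (simp_all add: equiv_def)
  ultimately show ?thesis by (meson symD transD)
qed

lemma sum_card_other_components:
  assumes fC: "finite C" and C0: "C0 \<in> components B C"
  shows "(\<Sum>D\<in>components B C - {C0}. card D) = card (C - C0)"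
proof -
  let ?R = "(edges B \<inter> C \<times> C)\<^sup>*"
  have fin: "finite (components B C)"
    unfolding components_def using fC by (simp add: setcompr_eq_image)
  have "components B C \<subseteq> UNIV // ?R" unfolding components_def quotient_def by auto
  then have "pairwise disjnt (components B C)"
    using quotient_disj[OF equiv_components[of B C]] unfolding pairwise_def disjnt_def by blast
  moreover have "\<Union> (components B C) = C"
  proof
    show "\<Union> (components B C) \<subseteq> C" using component_subset by auto
    show "C \<subseteq> \<Union> (components B C)" unfolding components_def by auto
  qed
  ultimately have "card C = (\<Sum>D\<in>components B C. card D)"
    using card_Union_disjoint[of "components B C"] finite_subset[OF component_subset fC] by simp
  then show ?thesis
    using sum.remove[OF fin C0, of card] card_Diff_subset[OF finite_subset[OF component_subset[OF C0] fC]
        component_subset[OF C0]]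
    by simp
qed

lemma expansion_coefficient_swap_component:
  fixes \<psi> :: "'a::linorder set \<Rightarrow> ('a \<Rightarrow> spin) \<Rightarrow> complex"
  assumes lat: "lattice M B \<zeta>" and mu: "\<mu> > 0" and fe: "finite_energy M B \<zeta> \<mu> t \<Phi>"
    and expand: "\<Phi> = (\<lambda>S. \<Sum>D\<in>{D. D \<subseteq> M \<and> card D = Ne}.
                      \<Sum>\<tau>\<in>Pi\<^sub>E D (\<lambda>_. {Up, Dn}). \<psi> D \<tau> * aprod M B \<zeta> \<mu> D \<tau> S)"
    and C: "C \<subseteq> M" "card C = Ne" and C0: "C0 \<in> components B C" "x \<in> C0" "y \<in> C0"
  shows "\<psi> C (restrict (\<tau> \<circ> Transposition.transpose x y) C) = \<psi> C (restrict \<tau> C)"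
proof (rule swap_invariant_rtrancl[OF _ component_connected[OF C0]])
  fix a b \<tau> assume "(a, b) \<in> edges B \<inter> C \<times> C"
  then consider "(a, b) \<in> B" "a \<in> C" "b \<in> C" | "(b, a) \<in> B" "a \<in> C" "b \<in> C"
    unfolding edges_def by auto
  then show "\<psi> C (restrict (\<tau> \<circ> Transposition.transpose a b) C) = \<psi> C (restrict \<tau> C)"
  proof cases
    case 1
    then show ?thesis by (rule expansion_coefficient_swap_bond[OF lat mu fe expand C])
  next
    case 2
    then show ?thesis
      using expansion_coefficient_swap_bond[OF lat mu fe expand C, of b a \<tau>] transpose_commute[of a b]
      by simp
  qed
qed

lemma casimir_eq_imp_le:
  fixes S m :: real
  assumes "0 \<le> S" "S * (S + 1) = m + m\<^sup>2"
  shows "m \<le> S"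
proof (rule ccontr)
  assume "\<not> m \<le> S"
  then have "S\<^sup>2 < m\<^sup>2" using assms(1) by (intro power_strict_mono) auto
  with \<open>\<not> m \<le> S\<close> show False using assms(2) by (simp add: algebra_simps power2_eq_square)
qed

theorem lemma1:
  fixes M :: "'a::linorder set" and B :: "('a \<times> 'a) set" and \<zeta> :: nat
    and \<mu> t \<nu> :: real and Ne :: nat and \<Phi> :: "'a fock"
    and \<psi> :: "'a set \<Rightarrow> ('a \<Rightarrow> spin) \<Rightarrow> complex"
    and C :: "'a set" and \<sigma> :: "'a \<Rightarrow> spin"
  assumes lat: "lattice M B \<zeta>"
    and mu: "\<mu> > 0" and tpos: "t > 0"
    and nu: "0 < \<nu>" "\<nu> < 1"
    and Ne: "Ne \<le> card M"
    and space: "in_space M B Ne \<Phi>"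
    and fe: "finite_energy M B \<zeta> \<mu> t \<Phi>"
    and eig: "\<Phi> \<noteq> (\<lambda>_. 0)"
      "\<exists>Stot::real. 0 \<le> Stot \<and> Stot \<le> \<nu> * (real Ne / 2)
         \<and> Stot2 (Lam M B) \<Phi> = (\<lambda>S. complex_of_real (Stot * (Stot + 1)) * \<Phi> S)"
    and expand: "\<Phi> = (\<lambda>S. \<Sum>D\<in>{D. D \<subseteq> M \<and> card D = Ne}.
                      \<Sum>\<tau>\<in>Pi\<^sub>E D (\<lambda>_. {Up, Dn}). \<psi> D \<tau> * aprod M B \<zeta> \<mu> D \<tau> S)"
    and C: "C \<subseteq> M" "card C = Ne" "\<sigma> \<in> Pi\<^sub>E C (\<lambda>_. {Up, Dn})" "\<psi> C \<sigma> \<noteq> 0"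
  shows "\<forall>C0\<in>components B C. (\<forall>D\<in>components B C. card D \<le> card C0) \<longrightarrow>
           real (\<Sum>D\<in>components B C - {C0}. card D) \<ge> real Ne / 2 * (1 - \<nu>)"
proof (intro ballI impI)
  \<comment> \<open>The bound holds for every component.\<close>
  fix C0 assume C0: "C0 \<in> components B C"
  obtain Stot :: real where Stot: "0 \<le> Stot" "Stot \<le> \<nu> * (real Ne / 2)"
    "Stot2 (Lam M B) \<Phi> = (\<lambda>S. complex_of_real (Stot * (Stot + 1)) * \<Phi> S)"
    using eig(2) by blast
  have fC: "finite C" using finite_subset[OF C(1) lattice_finite(1)[OF lat]] .
  define f where "f \<tau> = \<Phi> (site_config \<tau> C)" for \<tau>
  have f: "f \<tau> = \<psi> C (restrict \<tau> C) * of_real (anorm \<mu> \<zeta>) ^ Ne" for \<tau>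
    unfolding f_def by (rule expansion_coefficient[OF lat expand C(1,2)])
  have "Ms ` C \<subseteq> Lam M B" using C(1) Ms_in_Lam[of _ M B] by auto
  then have "Ssq_amp C f \<tau> = of_real (Stot * (Stot + 1)) * f \<tau>" for \<tau>
    using Stot2_site_config[OF lattice_finite(2)[OF lat] _ fC, of \<Phi> \<tau>] Stot(3)
    unfolding f_def by simp
  moreover have "f \<sigma> \<noteq> 0" using f[of \<sigma>] C(3,4) anorm_pos[of \<zeta> \<mu>] by (simp add: PiE_restrict)
  moreover have "swap_invariant C0 f"
    unfolding swap_invariant_def f
    using expansion_coefficient_swap_component[OF lat mu fe expand C(1,2) C0] by simp
  ultimately obtain d where d: "d \<le> card (C - C0)" and "complex_of_real (Stot * (Stot + 1)) =
      (of_nat (card C) - 2 * of_nat d) / 2 + ((of_nat (card C) - 2 * of_nat d) / 2)\<^sup>2"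
    using swap_invariant_eigenvalue[OF fC component_subset[OF C0]] by metis
  then have "Stot * (Stot + 1) = (real Ne - 2 * d) / 2 + ((real Ne - 2 * d) / 2)\<^sup>2"
    unfolding C(2) of_real_eq_iff[symmetric, where 'a = complex] by simp
  then have "(real Ne - 2 * d) / 2 \<le> Stot" by (rule casimir_eq_imp_le[OF Stot(1)])
  then show "real Ne / 2 * (1 - \<nu>) \<le> real (\<Sum>D\<in>components B C - {C0}. card D)"
    using d Stot(2) sum_card_other_components[OF fC C0] by (simp add: algebra_simps)
qed

end
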